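(* Let $(\Omega,d)$ be a compact metric space and $F$ a $k$-iterated contraction system on $\Omega$ with contraction ratio $\theta\in(0,1)$ and attractor $\Omega$. Let $A,B:\Omega\to\mathbb{R}$ be Lipschitz potentials which are normalized with respect to $F$, and let $\mu_A,\mu_B$ be their Gibbs measures. Let $C>0$, $\lambda\in(0,1)$ be constants, depending only on $\theta,\operatorname{Lip}(A),\operatorname{diam}\Omega$, such that $W_1((\mathscr{L}_A^* )^n\mu,(\mathscr{L}_A^* )^n\nu)\le C\lambda^nW_1(\mu,\nu)$ for all $n$ and all Borel probability measures $\mu,\nu$ on $\Omega$. Then with $C_3=\frac{C}{1-\lambda}\operatorname{diam}\Omega$, \[W_1(\mu_A,\mu_B)\le C_3\|A-B\|_\infty,\] and for every Lipschitz $\varphi:\Omega\to\mathbb{R}$, \[\Big|\int\varphi\,d\mu_A-\int\varphi\,d\mu_B\Big|\le C_3\operatorname{Lip}(\varphi)\|A-B\|_\infty.\]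
   Context: A $k$-multiset is an unordered list of $k$ elements with repetitions allowed; sums over it count multiplicities. A $k$-iterated contraction system (ICS) on $\Omega$ with contraction ratio $\theta$ assigns to each $x\in\Omega$ a $k$-multiset $F(x)$ of elements of $\Omega$ such that for all $x,y$ there are enumerations $F(x)=\{x_1,\dots,x_k\}$, $F(y)=\{y_1,\dots,y_k\}$ with $d(x_i,y_i)\le\theta d(x,y)$; attractor $\Omega$ means $\Omega$ is the union of the underlying sets of the $F(x)$. A potential $A$ is normalized w.r.t. $F$ if $\sum_{y\in F(x)}e^{A(y)}=1$ for all $x$. The transfer operator is $\mathscr{L}_Af(x)=\sum_{y\in F(x)}e^{A(y)}f(y)$ and $\mathscr{L}_A^*$ its dual on measures ($\int\varphi\,d(\mathscr{L}_A^*\mu)=\int\mathscr{L}_A\varphi\,d\mu$); for normalized $A$ it maps probability measures to probability measures. The Gibbs measure $\mu_A$ is the unique Borel probability measure with $\mathscr{L}_A^*\mu_A=\mu_A$. $W_1$ is the 1-Wasserstein distance: $W_1(\mu,\nu)=\inf_\pi\int d(x,y)\,d\pi$ over couplings $\pi$ of $\mu,\nu$. *)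

theory Defs
  imports "HOL-Probability.Probability" "HOL-Library.Multiset"
begin

definition borel_prob :: "'a::metric_space set \<Rightarrow> 'a measure set" where
  "borel_prob \<Omega> = {M. prob_space M \<and> sets M = sets (restrict_space borel \<Omega>)}"

definition is_ICS :: "'a::metric_space set \<Rightarrow> nat \<Rightarrow> real \<Rightarrow> ('a \<Rightarrow> 'a multiset) \<Rightarrow> bool" where
  "is_ICS \<Omega> k \<theta> F \<longleftrightarrow>
     (\<forall>x\<in>\<Omega>. size (F x) = k \<and> set_mset (F x) \<subseteq> \<Omega>) \<and>
     (\<forall>x\<in>\<Omega>. \<forall>y\<in>\<Omega>. \<exists>xs ys. mset xs = F x \<and> mset ys = F y \<and>
        (\<forall>i<k. dist (xs ! i) (ys ! i) \<le> \<theta> * dist x y))"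

definition has_attractor :: "'a set \<Rightarrow> ('a \<Rightarrow> 'a multiset) \<Rightarrow> bool" where
  "has_attractor \<Omega> F \<longleftrightarrow> \<Omega> = (\<Union>x\<in>\<Omega>. set_mset (F x))"

definition normalized :: "'a set \<Rightarrow> ('a \<Rightarrow> 'a multiset) \<Rightarrow> ('a \<Rightarrow> real) \<Rightarrow> bool" where
  "normalized \<Omega> F A \<longleftrightarrow> (\<forall>x\<in>\<Omega>. sum_mset (image_mset (\<lambda>y. exp (A y)) (F x)) = 1)"

definition transfer_op :: "('a \<Rightarrow> 'a multiset) \<Rightarrow> ('a \<Rightarrow> real) \<Rightarrow> ('a \<Rightarrow> real) \<Rightarrow> 'a \<Rightarrow> real" where
  "transfer_op F A f x = sum_mset (image_mset (\<lambda>y. exp (A y) * f y) (F x))"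

definition transfer_dual :: "'a::metric_space set \<Rightarrow> ('a \<Rightarrow> 'a multiset) \<Rightarrow> ('a \<Rightarrow> real) \<Rightarrow> 'a measure \<Rightarrow> 'a measure" where
  "transfer_dual \<Omega> F A \<mu> = measure_of \<Omega> (sets (restrict_space borel \<Omega>))
     (\<lambda>S. \<integral>\<^sup>+ x. ennreal (transfer_op F A (indicator S) x) \<partial>\<mu>)"

definition couplings :: "'a::metric_space set \<Rightarrow> 'a measure \<Rightarrow> 'a measure \<Rightarrow> ('a \<times> 'a) measure set" where
  "couplings \<Omega> \<mu> \<nu> = {\<pi>. prob_space \<pi> \<and>
      sets \<pi> = sets (restrict_space borel \<Omega> \<Otimes>\<^sub>M restrict_space borel \<Omega>) \<and>
      distr \<pi> \<mu> fst = \<mu> \<and> distr \<pi> \<nu> snd = \<nu>}"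

definition W1 :: "'a::metric_space set \<Rightarrow> 'a measure \<Rightarrow> 'a measure \<Rightarrow> real" where
  "W1 \<Omega> \<mu> \<nu> = (INF \<pi>\<in>couplings \<Omega> \<mu> \<nu>. \<integral> p. dist (fst p) (snd p) \<partial>\<pi>)"

definition sup_norm :: "'a set \<Rightarrow> ('a \<Rightarrow> real) \<Rightarrow> real" where
  "sup_norm \<Omega> f = (SUP x\<in>\<Omega>. \<bar>f x\<bar>)"

definition Lip :: "'a::metric_space set \<Rightarrow> ('a \<Rightarrow> real) \<Rightarrow> real" where
  "Lip \<Omega> f = Inf {L. lipschitz_on L \<Omega> f}"

end

theory Submission
  imports Defs
begin

text \<open>Since \<open>\<mu>\<^sub>A\<close> is fixed by \<open>L\<^sub>A\<^sup>*\<close>, telescoping along the orbit of \<open>\<mu>\<^sub>B\<close> under the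
  exponentially contracting iterates of \<open>L\<^sub>A\<^sup>*\<close> gives
  \<open>W\<^sub>1(\<mu>\<^sub>A, \<mu>\<^sub>B) \<le> C / (1 - \<lambda>) \<cdot> W\<^sub>1(L\<^sub>A\<^sup>* \<mu>\<^sub>B, \<mu>\<^sub>B)\<close>, and \<open>\<mu>\<^sub>B = L\<^sub>B\<^sup>* \<mu>\<^sub>B\<close>.
  To compare \<open>L\<^sub>A\<^sup>* \<nu>\<close> with \<open>L\<^sub>B\<^sup>* \<nu>\<close>, the common part \<open>min (e\<^sup>A) (e\<^sup>B)\<close> of the weights is
  transported along the diagonal, while the two remainders, of equal mass at most
  \<open>\<parallel>A - B\<parallel>\<^sub>\<infinity>\<close> since both potentials are normalized, are coupled independently at cost at
  most \<open>diam \<Omega>\<close>. The bound for Lipschitz observables follows by integrating \<open>\<phi> x - \<phi> y\<close>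
  against couplings.

  The telescoping needs the triangle inequality for \<open>W\<^sub>1\<close>. Without disintegration of measures,
  two couplings are glued by conditioning their middle coordinates on the cells of a fine finite
  partition of \<open>\<Omega>\<close>, which costs at most the mesh of the partition.\<close>

section \<open>Perturbation of a fixed point\<close>

lemma orbit_dist_le:
  fixes d :: "'b \<Rightarrow> 'b \<Rightarrow> real" and T :: "'b \<Rightarrow> 'b"
  assumes T_closed: "\<And>x. x \<in> X \<Longrightarrow> T x \<in> X"
    and triangle: "\<And>x y z. x \<in> X \<Longrightarrow> y \<in> X \<Longrightarrow> z \<in> X \<Longrightarrow> d x z \<le> d x y + d y z"
    and contraction: "\<And>n x y. x \<in> X \<Longrightarrow> y \<in> X \<Longrightarrow> d ((T ^^ n) x) ((T ^^ n) y) \<le> C * r ^ n * d x y"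
    and b: "b \<in> X"
  shows "d ((T ^^ Suc N) b) b \<le> (\<Sum>n<Suc N. C * r ^ n) * d (T b) b"
proof (induction N)
  case 0
  show ?case using contraction[of "T b" b 0] T_closed b by simp
next
  case (Suc N)
  have orbit_closed: "(T ^^ n) b \<in> X" for n
    using b by (induction n) (auto intro: T_closed)
  have "d ((T ^^ Suc (Suc N)) b) b \<le> d ((T ^^ Suc N) (T b)) ((T ^^ Suc N) b) + d ((T ^^ Suc N) b) b"
    using triangle[OF orbit_closed orbit_closed b, of "Suc (Suc N)" "Suc N"] by (simp only: funpow_Suc_right comp_def)
  also have "\<dots> \<le> C * r ^ Suc N * d (T b) b + (\<Sum>n<Suc N. C * r ^ n) * d (T b) b"
    using contraction[OF T_closed[OF b] b] Suc.IH by (rule add_mono)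
  finally show ?case by (simp add: algebra_simps)
qed

lemma fixed_point_perturbation:
  fixes d :: "'b \<Rightarrow> 'b \<Rightarrow> real" and T :: "'b \<Rightarrow> 'b"
  assumes T_closed: "\<And>x. x \<in> X \<Longrightarrow> T x \<in> X"
    and triangle: "\<And>x y z. x \<in> X \<Longrightarrow> y \<in> X \<Longrightarrow> z \<in> X \<Longrightarrow> d x z \<le> d x y + d y z"
    and contraction: "\<And>n x y. x \<in> X \<Longrightarrow> y \<in> X \<Longrightarrow> d ((T ^^ n) x) ((T ^^ n) y) \<le> C * r ^ n * d x y"
    and "0 \<le> C" "0 \<le> r" "r < 1"
    and a: "a \<in> X" "T a = a" and b: "b \<in> X" and nonneg: "0 \<le> d (T b) b"
  shows "d a b \<le> C / (1 - r) * d (T b) b"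
proof -
  have geometric: "(\<Sum>n<m. C * r ^ n) \<le> C / (1 - r)" for m
  proof -
    have "(\<Sum>n<m. r ^ n) \<le> (\<Sum>n. r ^ n)"
      using \<open>0 \<le> r\<close> \<open>r < 1\<close> by (intro sum_le_suminf summable_geometric) auto
    also have "\<dots> = 1 / (1 - r)" using \<open>0 \<le> r\<close> \<open>r < 1\<close> by (intro suminf_geometric) simp
    finally have "(\<Sum>n<m. r ^ n) \<le> 1 / (1 - r)" .
    from mult_left_mono[OF this \<open>0 \<le> C\<close>] show ?thesis by (simp add: sum_distrib_left)
  qed
  have fixed: "(T ^^ n) a = a" for n
    using a(2) by (induction n) simp_all
  have orbit_closed: "(T ^^ n) b \<in> X" for n
    using b by (induction n) (auto intro: T_closed)
  have bound: "d a b \<le> C * r ^ Suc N * d a b + C / (1 - r) * d (T b) b" for N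
  proof -
    have "d a b \<le> d ((T ^^ Suc N) a) ((T ^^ Suc N) b) + d ((T ^^ Suc N) b) b"
      using triangle[OF a(1) orbit_closed b, of "Suc N"] by (simp only: fixed)
    also have "\<dots> \<le> C * r ^ Suc N * d a b + (\<Sum>n<Suc N. C * r ^ n) * d (T b) b"
      using contraction[OF a(1) b] orbit_dist_le[OF T_closed triangle contraction b] by (rule add_mono)
    also have "(\<Sum>n<Suc N. C * r ^ n) * d (T b) b \<le> C / (1 - r) * d (T b) b"
      using geometric nonneg by (rule mult_right_mono)
    finally show ?thesis by simp
  qed
  have "(\<lambda>N. C * r ^ Suc N * d a b + C / (1 - r) * d (T b) b) \<longlonglongrightarrow> C * 0 * d a b + C / (1 - r) * d (T b) b"
    using \<open>0 \<le> r\<close> \<open>r < 1\<close> by (intro tendsto_intros LIMSEQ_Suc[OF LIMSEQ_power_zero]) simp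
  then show ?thesis using bound by (intro LIMSEQ_le_const) auto
qed

section \<open>Couplings and the Wasserstein distance\<close>

lemma lipschitz_on_Lip:
  assumes "lipschitz_on L X f"
  shows "lipschitz_on (Lip X f) X f"
proof -
  let ?S = "{L. lipschitz_on L X f}"
  have nonempty: "?S \<noteq> {}" using assms by blast
  have nn: "0 \<le> Lip X f" unfolding Lip_def using nonempty by (intro cInf_greatest) (auto dest: lipschitz_on_nonneg)
  show ?thesis
  proof (rule lipschitz_onI[OF _ nn])
    fix x y assume x: "x \<in> X" and y: "y \<in> X"
    show "dist (f x) (f y) \<le> Lip X f * dist x y"
    proof (cases "dist x y = 0")
      case True then show ?thesis by simp
    next
      case False
      then have dpos: "0 < dist x y" by simp
      have "dist (f x) (f y) / dist x y \<le> Lip X f"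
        unfolding Lip_def
      proof (rule cInf_greatest[OF nonempty])
        fix L assume "L \<in> ?S"
        then have "dist (f x) (f y) \<le> L * dist x y" using x y by (auto intro: lipschitz_onD)
        then show "dist (f x) (f y) / dist x y \<le> L" using dpos by (simp add: divide_le_eq)
      qed
      then show ?thesis using dpos by (simp add: divide_le_eq)
    qed
  qed
qed

lemma dist_eq_SUP_dense:
  fixes D :: "'a::metric_space set"
  assumes "D \<noteq> {}" and dense: "\<And>e. 0 < e \<Longrightarrow> \<exists>d\<in>D. dist x d < e"
  shows "dist x y = (SUP d\<in>D. \<bar>dist x d - dist y d\<bar>)"
proof (rule antisym)
  have diff_le: "\<bar>dist x d - dist y d\<bar> \<le> dist x y" for d
    using dist_triangle[of x d y] dist_triangle[of y d x] by (simp add: dist_commute)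
  then show "(SUP d\<in>D. \<bar>dist x d - dist y d\<bar>) \<le> dist x y"
    using \<open>D \<noteq> {}\<close> by (intro cSUP_least) auto
  show "dist x y \<le> (SUP d\<in>D. \<bar>dist x d - dist y d\<bar>)"
  proof (rule field_le_epsilon)
    fix e :: real assume "0 < e"
    then obtain d where d: "d \<in> D" "dist x d < e / 2" using dense[of "e / 2"] by auto
    have "dist x y \<le> \<bar>dist x d - dist y d\<bar> + e"
      using dist_triangle[of x y d] d(2) by (simp add: dist_commute)
    also have "\<bar>dist x d - dist y d\<bar> \<le> (SUP d\<in>D. \<bar>dist x d - dist y d\<bar>)"
      using diff_le d(1) by (intro cSUP_upper2 bdd_aboveI[of _ "dist x y"]) auto
    finally show "dist x y \<le> (SUP d\<in>D. \<bar>dist x d - dist y d\<bar>) + e" by simp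
  qed
qed

locale compact_domain =
  fixes \<Omega> :: "'a::metric_space set"
  assumes \<Omega>_compact: "compact \<Omega>" and \<Omega>_nonempty: "\<Omega> \<noteq> {}"
begin

abbreviation "M\<Omega> \<equiv> restrict_space borel \<Omega>"
abbreviation "M\<Omega>\<Omega> \<equiv> M\<Omega> \<Otimes>\<^sub>M M\<Omega>"

lemma space_M\<Omega>[simp]: "space M\<Omega> = \<Omega>"
  by (simp add: space_restrict_space)

lemma space_M\<Omega>\<Omega>[simp]: "space M\<Omega>\<Omega> = \<Omega> \<times> \<Omega>"
  by (simp add: space_pair_measure)

lemma sets_M\<Omega>_subset: "S \<in> sets M\<Omega> \<Longrightarrow> S \<subseteq> \<Omega>"
  using sets.sets_into_space by fastforce

lemma dist_le_diameter: "x \<in> \<Omega> \<Longrightarrow> y \<in> \<Omega> \<Longrightarrow> dist x y \<le> diameter \<Omega>"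
  using diameter_bounded_bound[OF compact_imp_bounded[OF \<Omega>_compact]] by blast

lemma diameter_nonneg: "0 \<le> diameter \<Omega>"
  using \<Omega>_nonempty dist_le_diameter[of x x for x] by (metis all_not_in_conv dist_self)

lemma countable_dense_subset:
  obtains D where "countable D" "D \<subseteq> \<Omega>" "\<And>x e. x \<in> \<Omega> \<Longrightarrow> 0 < e \<Longrightarrow> \<exists>d\<in>D. dist x d < e"
proof -
  have "\<forall>n::nat. \<exists>T. finite T \<and> T \<subseteq> \<Omega> \<and> \<Omega> \<subseteq> (\<Union>c\<in>T. ball c (inverse (real (Suc n))))"
  proof
    fix n :: nat
    have "\<Omega> \<subseteq> (\<Union>c\<in>\<Omega>. ball c (inverse (real (Suc n))))" by auto
    then obtain T where "T \<subseteq> \<Omega>" "finite T" "\<Omega> \<subseteq> (\<Union>c\<in>T. ball c (inverse (real (Suc n))))"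
      using compactE_image[OF \<Omega>_compact, of \<Omega> "\<lambda>c. ball c (inverse (real (Suc n)))"] by auto
    then show "\<exists>T. finite T \<and> T \<subseteq> \<Omega> \<and> \<Omega> \<subseteq> (\<Union>c\<in>T. ball c (inverse (real (Suc n))))" by blast
  qed
  then obtain T where T: "\<And>n. finite (T n) \<and> T n \<subseteq> \<Omega> \<and> \<Omega> \<subseteq> (\<Union>c\<in>T n. ball c (inverse (real (Suc n))))"
    by metis
  show ?thesis
  proof (rule that[of "\<Union>n. T n"])
    show "countable (\<Union>n. T n)" using T by (simp add: countable_finite)
    show "(\<Union>n. T n) \<subseteq> \<Omega>" using T by blast
    fix x e assume x: "x \<in> \<Omega>" and e: "(0::real) < e"
    obtain n where n: "inverse (real (Suc n)) < e" using reals_Archimedean[OF e] by auto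
    then obtain c where "c \<in> T n" "x \<in> ball c (inverse (real (Suc n)))" using T x by blast
    then have "dist x c < e" using n by (simp add: dist_commute)
    then show "\<exists>d\<in>\<Union>n. T n. dist x d < e" using \<open>c \<in> T n\<close> by blast
  qed
qed

text \<open>The type \<open>'a\<close> need not be second countable, so \<open>M\<Omega>\<Omega>\<close> may be smaller than the Borel
  \<open>\<sigma>\<close>-algebra of \<open>\<Omega> \<times> \<Omega>\<close> and continuity of \<open>dist\<close> does not suffice; instead the distance is a
  countable supremum over a dense subset.\<close>

lemma borel_measurable_dist: "(\<lambda>p. dist (fst p) (snd p)) \<in> borel_measurable M\<Omega>\<Omega>"
proof -
  obtain D where D: "countable D" "D \<subseteq> \<Omega>" "\<And>x e. x \<in> \<Omega> \<Longrightarrow> 0 < e \<Longrightarrow> \<exists>d\<in>D. dist x d < e"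
    using countable_dense_subset by blast
  have "D \<noteq> {}" using \<Omega>_nonempty D(3)[of _ 1] by fastforce
  have diff_le: "\<bar>dist x d - dist y d\<bar> \<le> dist x y" for x y d :: 'a
    using dist_triangle[of x d y] dist_triangle[of y d x] by (simp add: dist_commute)
  have dist_measurable: "(\<lambda>x. dist x d) \<in> borel_measurable M\<Omega>" for d :: 'a
    by (intro borel_measurable_continuous_on_restrict continuous_intros)
  have diff_measurable: "(\<lambda>p. \<bar>dist (fst p) d - dist (snd p) d\<bar>) \<in> borel_measurable M\<Omega>\<Omega>" for d
  proof -
    have "(\<lambda>p. dist (fst p) d) \<in> borel_measurable M\<Omega>\<Omega>"
      by (rule measurable_compose[OF measurable_fst dist_measurable])
    moreover have "(\<lambda>p. dist (snd p) d) \<in> borel_measurable M\<Omega>\<Omega>"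
      by (rule measurable_compose[OF measurable_snd dist_measurable])
    ultimately show ?thesis by measurable
  qed
  have sup_measurable: "(\<lambda>p. SUP d\<in>D. \<bar>dist (fst p) d - dist (snd p) d\<bar>) \<in> borel_measurable M\<Omega>\<Omega>"
  proof (rule borel_measurable_cSUP)
    show "countable D" by fact
    show "\<And>d. d \<in> D \<Longrightarrow> (\<lambda>p. \<bar>dist (fst p) d - dist (snd p) d\<bar>) \<in> borel_measurable M\<Omega>\<Omega>"
      using diff_measurable by blast
    fix p
    show "bdd_above ((\<lambda>d. \<bar>dist (fst p) d - dist (snd p) d\<bar>) ` D)"
      using diff_le by (intro bdd_aboveI[of _ "dist (fst p) (snd p)"]) auto
  qed
  have eq: "dist x y = (SUP d\<in>D. \<bar>dist x d - dist y d\<bar>)" if "x \<in> \<Omega>" for x y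
    using dist_eq_SUP_dense[OF \<open>D \<noteq> {}\<close> D(3)[OF that]] .
  from sup_measurable show ?thesis by (rule measurable_cong[THEN iffD1, rotated]) (auto intro!: eq[symmetric])
qed

definition cost :: "('a \<times> 'a) measure \<Rightarrow> real" where
  "cost \<pi> = (\<integral>p. dist (fst p) (snd p) \<partial>\<pi>)"

lemma W1_eq_INF_cost: "W1 \<Omega> \<mu> \<nu> = (INF \<pi>\<in>couplings \<Omega> \<mu> \<nu>. cost \<pi>)"
  by (simp add: W1_def cost_def)

lemma couplings_space: "\<pi> \<in> couplings \<Omega> \<mu> \<nu> \<Longrightarrow> space \<pi> = \<Omega> \<times> \<Omega>"
  unfolding couplings_def by (auto dest!: sets_eq_imp_space_eq)

lemma couplings_sets: "\<pi> \<in> couplings \<Omega> \<mu> \<nu> \<Longrightarrow> sets \<pi> = sets M\<Omega>\<Omega>"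
  unfolding couplings_def by auto

lemma couplings_prob_space: "\<pi> \<in> couplings \<Omega> \<mu> \<nu> \<Longrightarrow> prob_space \<pi>"
  unfolding couplings_def by auto

lemma integrable_dist_coupling: "\<pi> \<in> couplings \<Omega> \<mu> \<nu> \<Longrightarrow> integrable \<pi> (\<lambda>p. dist (fst p) (snd p))"
proof -
  assume c: "\<pi> \<in> couplings \<Omega> \<mu> \<nu>"
  interpret prob_space \<pi> using couplings_prob_space[OF c] .
  show ?thesis
    by (rule integrable_const_bound[where B="diameter \<Omega>"])
       (auto intro!: AE_I2 dist_le_diameter simp: couplings_space[OF c] measurable_cong_sets[OF couplings_sets[OF c] refl] borel_measurable_dist)
qed

lemma cost_nonneg: "0 \<le> cost \<pi>"
  unfolding cost_def by simp

lemma borel_prob_prob_space: "\<mu> \<in> borel_prob \<Omega> \<Longrightarrow> prob_space \<mu>" by (simp add: borel_prob_def)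
lemma borel_prob_sets: "\<mu> \<in> borel_prob \<Omega> \<Longrightarrow> sets \<mu> = sets M\<Omega>" by (simp add: borel_prob_def)
lemma borel_prob_space: "\<mu> \<in> borel_prob \<Omega> \<Longrightarrow> space \<mu> = \<Omega>"
  using borel_prob_sets[of \<mu>] sets_eq_imp_space_eq[of \<mu> M\<Omega>] by simp

lemma pair_measure_in_couplings:
  assumes "\<mu> \<in> borel_prob \<Omega>" "\<nu> \<in> borel_prob \<Omega>"
  shows "\<mu> \<Otimes>\<^sub>M \<nu> \<in> couplings \<Omega> \<mu> \<nu>"
proof -
  have pm: "prob_space \<mu>" and pn: "prob_space \<nu>" using assms borel_prob_prob_space by auto
  interpret N: prob_space \<nu> by fact
  interpret U: prob_space \<mu> by fact
  have s: "sets (\<mu> \<Otimes>\<^sub>M \<nu>) = sets M\<Omega>\<Omega>"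
    using assms borel_prob_sets by (intro sets_pair_measure_cong) auto
  have d2: "distr (\<mu> \<Otimes>\<^sub>M \<nu>) \<nu> snd = \<nu>"
  proof (rule measure_eqI)
    fix A assume A: "A \<in> sets (distr (\<mu> \<Otimes>\<^sub>M \<nu>) \<nu> snd)"
    then have A': "A \<in> sets \<nu>" by simp
    have "emeasure (distr (\<mu> \<Otimes>\<^sub>M \<nu>) \<nu> snd) A = emeasure (\<mu> \<Otimes>\<^sub>M \<nu>) (space \<mu> \<times> A)"
      using A' by (auto simp add: emeasure_distr space_pair_measure dest: sets.sets_into_space
          intro!: arg_cong2[where f=emeasure])
    also have "\<dots> = emeasure \<nu> A"
      using A' by (simp add: N.emeasure_pair_measure_Times U.emeasure_space_1)
    finally show "emeasure (distr (\<mu> \<Otimes>\<^sub>M \<nu>) \<nu> snd) A = emeasure \<nu> A" .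
  qed simp
  show ?thesis unfolding couplings_def
    using prob_space_pair[OF pm pn] s N.distr_pair_fst d2 by auto
qed

lemma couplings_nonempty: "\<mu> \<in> borel_prob \<Omega> \<Longrightarrow> \<nu> \<in> borel_prob \<Omega> \<Longrightarrow> couplings \<Omega> \<mu> \<nu> \<noteq> {}"
  using pair_measure_in_couplings by blast

lemma bdd_below_cost: "bdd_below (cost ` couplings \<Omega> \<mu> \<nu>)"
  using cost_nonneg by (intro bdd_belowI[of _ 0]) auto

lemma W1_le_cost: "\<pi> \<in> couplings \<Omega> \<mu> \<nu> \<Longrightarrow> W1 \<Omega> \<mu> \<nu> \<le> cost \<pi>"
  unfolding W1_eq_INF_cost by (rule cINF_lower[OF bdd_below_cost])

lemma W1_nonneg: "\<mu> \<in> borel_prob \<Omega> \<Longrightarrow> \<nu> \<in> borel_prob \<Omega> \<Longrightarrow> 0 \<le> W1 \<Omega> \<mu> \<nu>"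
  unfolding W1_eq_INF_cost using couplings_nonempty cost_nonneg by (intro cINF_greatest) auto

lemma W1_near_optimal_coupling:
  assumes "\<mu> \<in> borel_prob \<Omega>" "\<nu> \<in> borel_prob \<Omega>" "0 < e"
  obtains \<pi> where "\<pi> \<in> couplings \<Omega> \<mu> \<nu>" "cost \<pi> < W1 \<Omega> \<mu> \<nu> + e"
proof -
  have "(INF \<pi>\<in>couplings \<Omega> \<mu> \<nu>. cost \<pi>) < (INF \<pi>\<in>couplings \<Omega> \<mu> \<nu>. cost \<pi>) + e"
    using assms(3) by simp
  then obtain \<pi> where "\<pi> \<in> couplings \<Omega> \<mu> \<nu>" "cost \<pi> < (INF \<pi>\<in>couplings \<Omega> \<mu> \<nu>. cost \<pi>) + e"
    using cINF_less_iff[OF couplings_nonempty[OF assms(1,2)] bdd_below_cost] by blast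
  then show ?thesis using that W1_eq_INF_cost by metis
qed

lemma small_measurable_partition:
  assumes "0 < \<delta>"
  obtains m :: nat and E :: "nat \<Rightarrow> 'a set" where "\<And>j. E j \<in> sets M\<Omega>" "disjoint_family_on E {..<m}" "(\<Union>j<m. E j) = \<Omega>"
    "\<And>j x y. x \<in> E j \<Longrightarrow> y \<in> E j \<Longrightarrow> dist x y \<le> \<delta>"
proof -
  have "\<Omega> \<subseteq> (\<Union>c\<in>\<Omega>. ball c (\<delta>/2))" using assms by auto
  then obtain C where C: "C \<subseteq> \<Omega>" "finite C" "\<Omega> \<subseteq> (\<Union>c\<in>C. ball c (\<delta>/2))"
    using compactE_image[OF \<Omega>_compact, of \<Omega> "\<lambda>c. ball c (\<delta>/2)"] by auto
  obtain cs where cs: "set cs = C" using finite_list[OF C(2)] by blast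
  define m where "m = length cs"
  define E where "E j = (if j < m then \<Omega> \<inter> (ball (cs!j) (\<delta>/2) - (\<Union>i<j. ball (cs!i) (\<delta>/2))) else {})" for j
  show ?thesis
  proof (rule that[of E m])
    fix j
    have "ball (cs!j) (\<delta>/2) - (\<Union>i<j. ball (cs!i) (\<delta>/2)) \<in> sets borel"
      by (intro sets.Diff sets.finite_UN borel_open open_ball) auto
    then show "E j \<in> sets M\<Omega>"
      unfolding E_def by (auto simp: sets_restrict_space)
  next
    show "disjoint_family_on E {..<m}"
      unfolding disjoint_family_on_def
    proof (intro ballI impI)
      fix i j assume "i \<in> {..<m}" "j \<in> {..<m}" "i \<noteq> j"
      then show "E i \<inter> E j = {}"
        by (cases "i < j") (auto simp: E_def)
    qed
  next
    show "(\<Union>j<m. E j) = \<Omega>"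
    proof
      show "(\<Union>j<m. E j) \<subseteq> \<Omega>" by (auto simp: E_def)
      show "\<Omega> \<subseteq> (\<Union>j<m. E j)"
      proof
        fix x assume x: "x \<in> \<Omega>"
        then obtain c where "c \<in> C" "x \<in> ball c (\<delta>/2)" using C(3) by blast
        then obtain j where j: "j < m" "x \<in> ball (cs!j) (\<delta>/2)" using cs by (auto simp: m_def in_set_conv_nth)
        define j0 where "j0 = (LEAST j. x \<in> ball (cs!j) (\<delta>/2))"
        have j0: "x \<in> ball (cs!j0) (\<delta>/2)" "j0 \<le> j" unfolding j0_def using j(2) by (auto intro: LeastI Least_le)
        have "\<forall>i<j0. x \<notin> ball (cs!i) (\<delta>/2)" unfolding j0_def using not_less_Least by blast
        then have "x \<in> E j0" using j0 j x by (auto simp: E_def)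
        then show "x \<in> (\<Union>j<m. E j)" using j0 j by auto
      qed
    qed
  next
    fix j x y assume "x \<in> E j" "y \<in> E j"
    then have "dist (cs!j) x < \<delta>/2" "dist (cs!j) y < \<delta>/2" by (auto simp: E_def split: if_splits)
    then show "dist x y \<le> \<delta>" using dist_triangle[of x y "cs!j"] by (simp add: dist_commute)
  qed
qed

lemma \<Omega>_in_sets[measurable]: "\<Omega> \<in> sets M\<Omega>"
  using sets.top[of M\<Omega>] by simp

lemma couplings_measurable_eq: "\<pi> \<in> couplings \<Omega> \<mu> \<nu> \<Longrightarrow> measurable \<pi> N = measurable M\<Omega>\<Omega> N"
  by (rule measurable_cong_sets[OF couplings_sets refl])

lemma borel_prob_measurable_eq: "\<mu> \<in> borel_prob \<Omega> \<Longrightarrow> measurable N \<mu> = measurable N M\<Omega>"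
  by (rule measurable_cong_sets[OF refl borel_prob_sets])

lemma emeasure_coupling_fst:
  assumes "\<pi> \<in> couplings \<Omega> \<mu> \<nu>" "\<mu> \<in> borel_prob \<Omega>" "S \<in> sets M\<Omega>"
  shows "emeasure \<pi> (S \<times> \<Omega>) = emeasure \<mu> S"
proof -
  have meas: "fst \<in> \<pi> \<rightarrow>\<^sub>M \<mu>"
    unfolding couplings_measurable_eq[OF assms(1)] borel_prob_measurable_eq[OF assms(2)] by measurable
  have "emeasure \<mu> S = emeasure (distr \<pi> \<mu> fst) S" using assms(1) by (simp add: couplings_def)
  also have "\<dots> = emeasure \<pi> (fst -` S \<inter> space \<pi>)"
    using meas assms(3) borel_prob_sets[OF assms(2)] by (simp add: emeasure_distr)
  also have "fst -` S \<inter> space \<pi> = S \<times> \<Omega>"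
    using sets_M\<Omega>_subset[OF assms(3)] couplings_space[OF assms(1)] by auto
  finally show ?thesis by simp
qed

lemma emeasure_coupling_snd:
  assumes "\<pi> \<in> couplings \<Omega> \<mu> \<nu>" "\<nu> \<in> borel_prob \<Omega>" "S \<in> sets M\<Omega>"
  shows "emeasure \<pi> (\<Omega> \<times> S) = emeasure \<nu> S"
proof -
  have meas: "snd \<in> \<pi> \<rightarrow>\<^sub>M \<nu>"
    unfolding couplings_measurable_eq[OF assms(1)] borel_prob_measurable_eq[OF assms(2)] by measurable
  have "emeasure \<nu> S = emeasure (distr \<pi> \<nu> snd) S" using assms(1) by (simp add: couplings_def)
  also have "\<dots> = emeasure \<pi> (snd -` S \<inter> space \<pi>)"
    using meas assms(3) borel_prob_sets[OF assms(2)] by (simp add: emeasure_distr)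
  also have "snd -` S \<inter> space \<pi> = \<Omega> \<times> S"
    using sets_M\<Omega>_subset[OF assms(3)] couplings_space[OF assms(1)] by auto
  finally show ?thesis by simp
qed

lemma couplings_intro:
  assumes sets_\<pi>: "sets \<pi> = sets M\<Omega>\<Omega>" and mu: "\<mu> \<in> borel_prob \<Omega>" and nu: "\<nu> \<in> borel_prob \<Omega>"
    and fst_marginal: "\<And>S. S \<in> sets M\<Omega> \<Longrightarrow> emeasure \<pi> (S \<times> \<Omega>) = emeasure \<mu> S"
    and snd_marginal: "\<And>S. S \<in> sets M\<Omega> \<Longrightarrow> emeasure \<pi> (\<Omega> \<times> S) = emeasure \<nu> S"
  shows "\<pi> \<in> couplings \<Omega> \<mu> \<nu>"
proof -
  have space_\<pi>: "space \<pi> = \<Omega> \<times> \<Omega>" using sets_eq_imp_space_eq[OF sets_\<pi>] by simp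
  have "prob_space \<pi>"
  proof (rule prob_spaceI)
    have "emeasure \<pi> (space \<pi>) = emeasure \<mu> \<Omega>" using fst_marginal[OF \<Omega>_in_sets] by (simp add: space_\<pi>)
    then show "emeasure \<pi> (space \<pi>) = 1"
      using prob_space.emeasure_space_1[OF borel_prob_prob_space[OF mu]] borel_prob_space[OF mu] by simp
  qed
  moreover have "distr \<pi> \<mu> fst = \<mu>"
  proof (rule measure_eqI)
    fix S assume "S \<in> sets (distr \<pi> \<mu> fst)"
    then have S: "S \<in> sets M\<Omega>" using borel_prob_sets[OF mu] by simp
    have "fst \<in> \<pi> \<rightarrow>\<^sub>M \<mu>" using measurable_cong_sets[OF sets_\<pi> borel_prob_sets[OF mu]] by simp
    then have "emeasure (distr \<pi> \<mu> fst) S = emeasure \<pi> (fst -` S \<inter> space \<pi>)"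
      using S borel_prob_sets[OF mu] by (simp add: emeasure_distr)
    also have "fst -` S \<inter> space \<pi> = S \<times> \<Omega>" using sets_M\<Omega>_subset[OF S] by (auto simp: space_\<pi>)
    finally show "emeasure (distr \<pi> \<mu> fst) S = emeasure \<mu> S" using fst_marginal[OF S] by simp
  qed simp
  moreover have "distr \<pi> \<nu> snd = \<nu>"
  proof (rule measure_eqI)
    fix S assume "S \<in> sets (distr \<pi> \<nu> snd)"
    then have S: "S \<in> sets M\<Omega>" using borel_prob_sets[OF nu] by simp
    have "snd \<in> \<pi> \<rightarrow>\<^sub>M \<nu>" using measurable_cong_sets[OF sets_\<pi> borel_prob_sets[OF nu]] by simp
    then have "emeasure (distr \<pi> \<nu> snd) S = emeasure \<pi> (snd -` S \<inter> space \<pi>)"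
      using S borel_prob_sets[OF nu] by (simp add: emeasure_distr)
    also have "snd -` S \<inter> space \<pi> = \<Omega> \<times> S" using sets_M\<Omega>_subset[OF S] by (auto simp: space_\<pi>)
    finally show "emeasure (distr \<pi> \<nu> snd) S = emeasure \<nu> S" using snd_marginal[OF S] by simp
  qed simp
  ultimately show ?thesis unfolding couplings_def using sets_\<pi> by auto
qed

lemma integral_diff_le_lipschitz_cost:
  assumes mu: "\<mu> \<in> borel_prob \<Omega>" and nu: "\<nu> \<in> borel_prob \<Omega>" and c: "\<pi> \<in> couplings \<Omega> \<mu> \<nu>"
    and L: "lipschitz_on L \<Omega> \<phi>"
  shows "\<bar>(\<integral>x. \<phi> x \<partial>\<mu>) - (\<integral>x. \<phi> x \<partial>\<nu>)\<bar> \<le> L * cost \<pi>"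
proof -
  interpret prob_space \<pi> using couplings_prob_space[OF c] .
  have "continuous_on \<Omega> \<phi>" using L by (rule lipschitz_on_continuous_on)
  then have \<phi>_meas: "\<phi> \<in> borel_measurable M\<Omega>" by (rule borel_measurable_continuous_on_restrict)
  have "compact (\<phi> ` \<Omega>)" using \<open>continuous_on \<Omega> \<phi>\<close> \<Omega>_compact by (rule compact_continuous_image)
  then obtain M where M: "\<And>x. x \<in> \<Omega> \<Longrightarrow> \<bar>\<phi> x\<bar> \<le> M"
    using compact_imp_bounded[of "\<phi> ` \<Omega>"] by (auto simp: bounded_iff)
  have fst_meas: "fst \<in> \<pi> \<rightarrow>\<^sub>M \<mu>" and snd_meas: "snd \<in> \<pi> \<rightarrow>\<^sub>M \<nu>"
    unfolding couplings_measurable_eq[OF c] borel_prob_measurable_eq[OF mu] borel_prob_measurable_eq[OF nu]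
    by measurable
  have \<phi>_meas_mu: "\<phi> \<in> borel_measurable \<mu>" and \<phi>_meas_nu: "\<phi> \<in> borel_measurable \<nu>"
    using \<phi>_meas measurable_cong_sets[OF borel_prob_sets[OF mu] refl]
      measurable_cong_sets[OF borel_prob_sets[OF nu] refl] by blast+
  have "(\<integral>x. \<phi> x \<partial>\<mu>) = (\<integral>x. \<phi> x \<partial>distr \<pi> \<mu> fst)" using c by (simp add: couplings_def)
  also have "\<dots> = (\<integral>p. \<phi> (fst p) \<partial>\<pi>)" by (rule integral_distr[OF fst_meas \<phi>_meas_mu])
  finally have int_mu: "(\<integral>x. \<phi> x \<partial>\<mu>) = (\<integral>p. \<phi> (fst p) \<partial>\<pi>)" .
  have "(\<integral>x. \<phi> x \<partial>\<nu>) = (\<integral>x. \<phi> x \<partial>distr \<pi> \<nu> snd)" using c by (simp add: couplings_def)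
  also have "\<dots> = (\<integral>p. \<phi> (snd p) \<partial>\<pi>)" by (rule integral_distr[OF snd_meas \<phi>_meas_nu])
  finally have int_nu: "(\<integral>x. \<phi> x \<partial>\<nu>) = (\<integral>p. \<phi> (snd p) \<partial>\<pi>)" .
  have int_fst: "integrable \<pi> (\<lambda>p. \<phi> (fst p))"
    by (rule integrable_const_bound[where B=M])
      (auto intro!: AE_I2 M simp: couplings_space[OF c] measurable_compose[OF fst_meas \<phi>_meas_mu])
  have int_snd: "integrable \<pi> (\<lambda>p. \<phi> (snd p))"
    by (rule integrable_const_bound[where B=M])
      (auto intro!: AE_I2 M simp: couplings_space[OF c] measurable_compose[OF snd_meas \<phi>_meas_nu])
  have "\<bar>(\<integral>p. \<phi> (fst p) \<partial>\<pi>) - (\<integral>p. \<phi> (snd p) \<partial>\<pi>)\<bar> = \<bar>\<integral>p. \<phi> (fst p) - \<phi> (snd p) \<partial>\<pi>\<bar>"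
    by (simp add: Bochner_Integration.integral_diff[OF int_fst int_snd])
  also have "\<dots> \<le> (\<integral>p. \<bar>\<phi> (fst p) - \<phi> (snd p)\<bar> \<partial>\<pi>)"
    using integral_norm_bound[of \<pi> "\<lambda>p. \<phi> (fst p) - \<phi> (snd p)"] by simp
  also have "\<dots> \<le> (\<integral>p. L * dist (fst p) (snd p) \<partial>\<pi>)"
  proof (rule integral_mono)
    show "integrable \<pi> (\<lambda>p. \<bar>\<phi> (fst p) - \<phi> (snd p)\<bar>)" using int_fst int_snd by auto
    show "integrable \<pi> (\<lambda>p. L * dist (fst p) (snd p))" using integrable_dist_coupling[OF c] by auto
    fix p assume "p \<in> space \<pi>"
    then show "\<bar>\<phi> (fst p) - \<phi> (snd p)\<bar> \<le> L * dist (fst p) (snd p)"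
      using lipschitz_onD[OF L] by (auto simp: couplings_space[OF c] dist_real_def)
  qed
  also have "\<dots> = L * cost \<pi>" by (simp add: cost_def)
  finally show ?thesis using int_mu int_nu by simp
qed

lemma integral_diff_le_lipschitz_W1:
  assumes mu: "\<mu> \<in> borel_prob \<Omega>" and nu: "\<nu> \<in> borel_prob \<Omega>" and L: "lipschitz_on L \<Omega> \<phi>"
  shows "\<bar>(\<integral>x. \<phi> x \<partial>\<mu>) - (\<integral>x. \<phi> x \<partial>\<nu>)\<bar> \<le> L * W1 \<Omega> \<mu> \<nu>"
proof (cases "L = 0")
  case True
  then show ?thesis
    using couplings_nonempty[OF mu nu] integral_diff_le_lipschitz_cost[OF mu nu _ L] by auto
next
  case False
  then have "0 < L" using lipschitz_on_nonneg[OF L] by simp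
  have "\<bar>(\<integral>x. \<phi> x \<partial>\<mu>) - (\<integral>x. \<phi> x \<partial>\<nu>)\<bar> / L \<le> W1 \<Omega> \<mu> \<nu>"
    unfolding W1_eq_INF_cost using couplings_nonempty[OF mu nu]
  proof (rule cINF_greatest)
    fix \<pi> assume "\<pi> \<in> couplings \<Omega> \<mu> \<nu>"
    then show "\<bar>(\<integral>x. \<phi> x \<partial>\<mu>) - (\<integral>x. \<phi> x \<partial>\<nu>)\<bar> / L \<le> cost \<pi>"
      using integral_diff_le_lipschitz_cost[OF mu nu _ L] \<open>0 < L\<close> by (simp add: divide_le_eq ac_simps)
  qed
  then show ?thesis using \<open>0 < L\<close> by (simp add: divide_le_eq ac_simps)
qed

end

section \<open>Gluing couplings\<close>

lemma nn_integral_pair_measure_mult: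
  assumes "sigma_finite_measure M2"
    and a[measurable]: "a \<in> borel_measurable M1" and b[measurable]: "b \<in> borel_measurable M2"
  shows "(\<integral>\<^sup>+p. a (fst p) * b (snd p) \<partial>(M1 \<Otimes>\<^sub>M M2)) = (\<integral>\<^sup>+x. a x \<partial>M1) * (\<integral>\<^sup>+y. b y \<partial>M2)"
proof -
  interpret M2: sigma_finite_measure M2 by fact
  have "(\<integral>\<^sup>+p. a (fst p) * b (snd p) \<partial>(M1 \<Otimes>\<^sub>M M2)) = (\<integral>\<^sup>+x. \<integral>\<^sup>+y. a x * b y \<partial>M2 \<partial>M1)"
    by (subst M2.nn_integral_fst[symmetric]) simp_all
  also have "\<dots> = (\<integral>\<^sup>+x. a x * (\<integral>\<^sup>+y. b y \<partial>M2) \<partial>M1)" by (simp add: nn_integral_cmult)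
  also have "\<dots> = (\<integral>\<^sup>+x. a x \<partial>M1) * (\<integral>\<^sup>+y. b y \<partial>M2)" by (simp add: nn_integral_multc)
  finally show ?thesis .
qed

context compact_domain
begin

lemma borel_measurable_ennreal_dist[measurable]: "(\<lambda>q. ennreal (dist (fst q) (snd q))) \<in> borel_measurable M\<Omega>\<Omega>"
  using measurable_compose[OF borel_measurable_dist measurable_ennreal] by simp

lemma nn_integral_dist_coupling: "\<pi> \<in> couplings \<Omega> \<alpha> \<beta> \<Longrightarrow> (\<integral>\<^sup>+q. ennreal (dist (fst q) (snd q)) \<partial>\<pi>) = ennreal (cost \<pi>)"
  unfolding cost_def
  by (rule nn_integral_eq_integral[OF integrable_dist_coupling]) (auto intro!: AE_I2)

end

locale coupling_gluing = compact_domain +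
  fixes \<mu> \<nu> \<rho> :: "'a measure" and \<pi>1 \<pi>2 :: "('a \<times> 'a) measure" and m :: nat and E :: "nat \<Rightarrow> 'a set"
  assumes mu: "\<mu> \<in> borel_prob \<Omega>" and nu: "\<nu> \<in> borel_prob \<Omega>" and rho: "\<rho> \<in> borel_prob \<Omega>"
    and c1: "\<pi>1 \<in> couplings \<Omega> \<mu> \<nu>" and c2: "\<pi>2 \<in> couplings \<Omega> \<nu> \<rho>"
    and E_sets: "\<And>j. E j \<in> sets M\<Omega>" and E_disj: "disjoint_family_on E {..<m}"
    and E_cover: "(\<Union>j<m. E j) = \<Omega>"
begin

lemma E_measurable[measurable]: "E j \<in> sets M\<Omega>" by (rule E_sets)

lemma E_subset: "E j \<subseteq> \<Omega>" using sets_M\<Omega>_subset[OF E_sets] .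

lemma emeasure_\<nu>_eq_measure: "emeasure \<nu> A = ennreal (measure \<nu> A)"
proof -
  interpret prob_space \<nu> using borel_prob_prob_space[OF nu] .
  show ?thesis by (rule emeasure_eq_measure)
qed

text \<open>The glued coupling runs along \<open>\<pi>1\<close> and then \<open>\<pi>2\<close>, but only through pairs of middle points
  lying in a common cell \<open>E j\<close>; the weight \<open>1 / \<nu> (E j)\<close> restores the outer marginals, and null
  cells get the harmless weight \<open>1 / 0 = 0\<close>.\<close>

definition "cell_weight j = ennreal (1 / measure \<nu> (E j))"
definition "glue_density p = (\<Sum>j<m. indicator (E j) (snd (fst p)) * indicator (E j) (fst (snd p)) * cell_weight j)"
abbreviation "\<pi>\<pi> \<equiv> \<pi>1 \<Otimes>\<^sub>M \<pi>2"
abbreviation "outer \<equiv> (\<lambda>p::('a\<times>'a)\<times>('a\<times>'a). (fst (fst p), snd (snd p)))"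
definition "glued = distr (density \<pi>\<pi> glue_density) M\<Omega>\<Omega> outer"

lemma sets_\<pi>\<pi>: "sets \<pi>\<pi> = sets (M\<Omega>\<Omega> \<Otimes>\<^sub>M M\<Omega>\<Omega>)"
  by (intro sets_pair_measure_cong couplings_sets[OF c1] couplings_sets[OF c2])

lemma space_\<pi>\<pi>: "space \<pi>\<pi> = (\<Omega> \<times> \<Omega>) \<times> (\<Omega> \<times> \<Omega>)"
  by (simp add: space_pair_measure couplings_space[OF c1] couplings_space[OF c2])

lemma measurable_\<pi>\<pi>_eq: "measurable \<pi>\<pi> N = measurable (M\<Omega>\<Omega> \<Otimes>\<^sub>M M\<Omega>\<Omega>) N"
  by (rule measurable_cong_sets[OF sets_\<pi>\<pi> refl])

lemma glue_density_measurable[measurable]: "glue_density \<in> borel_measurable \<pi>\<pi>"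
  unfolding measurable_\<pi>\<pi>_eq glue_density_def by measurable

lemma outer_measurable: "outer \<in> \<pi>\<pi> \<rightarrow>\<^sub>M M\<Omega>\<Omega>"
  unfolding measurable_\<pi>\<pi>_eq by measurable

lemma outer_measurable_density: "outer \<in> density \<pi>\<pi> glue_density \<rightarrow>\<^sub>M M\<Omega>\<Omega>"
  using outer_measurable by (simp add: measurable_cong_sets[OF sets_density refl])

lemma cell_mass_times_weight: "emeasure \<nu> (E j) * cell_weight j = (if measure \<nu> (E j) = 0 then 0 else 1)"
proof -
  interpret prob_space \<nu> using borel_prob_prob_space[OF nu] .
  show ?thesis
    by (simp add: cell_weight_def emeasure_eq_measure ennreal_mult[symmetric])
qed

lemma nn_integral_glue_density_mult:
  assumes g[measurable]: "g \<in> borel_measurable M\<Omega>\<Omega>" and h[measurable]: "h \<in> borel_measurable M\<Omega>\<Omega>"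
  shows "(\<integral>\<^sup>+p. glue_density p * (g (fst p) * h (snd p)) \<partial>\<pi>\<pi>) =
    (\<Sum>j<m. (\<integral>\<^sup>+q. indicator (E j) (snd q) * g q \<partial>\<pi>1) * (\<integral>\<^sup>+q. indicator (E j) (fst q) * h q \<partial>\<pi>2) * cell_weight j)"
proof -
  have "(\<integral>\<^sup>+p. glue_density p * (g (fst p) * h (snd p)) \<partial>\<pi>\<pi>) =
     (\<integral>\<^sup>+p. (\<Sum>j<m. ((indicator (E j) (snd (fst p)) * g (fst p)) * (indicator (E j) (fst (snd p)) * h (snd p))) * cell_weight j) \<partial>\<pi>\<pi>)"
    unfolding glue_density_def sum_distrib_right by (intro nn_integral_cong sum.cong refl) (simp add: ac_simps)
  also have "\<dots> = (\<Sum>j<m. \<integral>\<^sup>+p. ((indicator (E j) (snd (fst p)) * g (fst p)) * (indicator (E j) (fst (snd p)) * h (snd p))) * cell_weight j \<partial>\<pi>\<pi>)"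
    by (intro nn_integral_sum) (unfold measurable_\<pi>\<pi>_eq, measurable)
  also have "\<dots> = (\<Sum>j<m. (\<integral>\<^sup>+p. (indicator (E j) (snd (fst p)) * g (fst p)) * (indicator (E j) (fst (snd p)) * h (snd p)) \<partial>\<pi>\<pi>) * cell_weight j)"
    by (intro sum.cong refl nn_integral_multc) (unfold measurable_\<pi>\<pi>_eq, measurable)
  also have "\<dots> = (\<Sum>j<m. (\<integral>\<^sup>+q. indicator (E j) (snd q) * g q \<partial>\<pi>1) * (\<integral>\<^sup>+q. indicator (E j) (fst q) * h q \<partial>\<pi>2) * cell_weight j)"
  proof (intro sum.cong refl)
    fix j
    have ma: "(\<lambda>q. indicator (E j) (snd q) * g q) \<in> borel_measurable \<pi>1"
      unfolding couplings_measurable_eq[OF c1] by measurable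
    have mb: "(\<lambda>q. indicator (E j) (fst q) * h q) \<in> borel_measurable \<pi>2"
      unfolding couplings_measurable_eq[OF c2] by measurable
    show "(\<integral>\<^sup>+p. (indicator (E j) (snd (fst p)) * g (fst p)) * (indicator (E j) (fst (snd p)) * h (snd p)) \<partial>\<pi>\<pi>) * cell_weight j =
      (\<integral>\<^sup>+q. indicator (E j) (snd q) * g q \<partial>\<pi>1) * (\<integral>\<^sup>+q. indicator (E j) (fst q) * h q \<partial>\<pi>2) * cell_weight j"
      using nn_integral_pair_measure_mult[OF prob_space_imp_sigma_finite[OF couplings_prob_space[OF c2]] ma mb] by simp
  qed
  finally show ?thesis .
qed

lemma nn_integral_glued:
  assumes f[measurable]: "f \<in> borel_measurable M\<Omega>\<Omega>"
  shows "(\<integral>\<^sup>+q. f q \<partial>glued) = (\<integral>\<^sup>+p. glue_density p * f (outer p) \<partial>\<pi>\<pi>)"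
proof -
  have "(\<integral>\<^sup>+q. f q \<partial>glued) = (\<integral>\<^sup>+p. f (outer p) \<partial>density \<pi>\<pi> glue_density)"
    unfolding glued_def by (rule nn_integral_distr[OF outer_measurable_density]) simp
  also have "\<dots> = (\<integral>\<^sup>+p. glue_density p * f (outer p) \<partial>\<pi>\<pi>)"
    by (rule nn_integral_density[OF glue_density_measurable measurable_compose[OF outer_measurable f]])
  finally show ?thesis .
qed

lemma emeasure_glued:
  assumes X: "X \<in> sets M\<Omega>\<Omega>"
  shows "emeasure glued X = (\<integral>\<^sup>+p. glue_density p * indicator X (outer p) \<partial>\<pi>\<pi>)"
  using nn_integral_glued[of "indicator X"] X by (simp add: glued_def)

lemma sets_glued: "sets glued = sets M\<Omega>\<Omega>" by (simp add: glued_def)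

lemma sum_indicator_cells: "y \<in> \<Omega> \<Longrightarrow> (\<Sum>j<m. indicator (E j) y) = (1::ennreal)"
proof -
  assume y: "y \<in> \<Omega>"
  have "indicator (\<Union>j\<in>{..<m}. E j) y = (\<Sum>j<m. indicator (E j) y :: ennreal)"
    using E_disj by (intro indicator_UN_disjoint) auto
  then show ?thesis using y E_cover by simp
qed

lemma nn_integral_cell_fst: "(\<integral>\<^sup>+q. indicator (E j) (fst q) * 1 \<partial>\<pi>2) = emeasure \<nu> (E j)"
proof -
  have "(\<integral>\<^sup>+q. indicator (E j) (fst q) * 1 \<partial>\<pi>2) = (\<integral>\<^sup>+q. indicator (E j \<times> \<Omega>) q \<partial>\<pi>2)"
    by (intro nn_integral_cong) (auto simp: indicator_def couplings_space[OF c2])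
  also have "\<dots> = emeasure \<pi>2 (E j \<times> \<Omega>)"
    by (simp add: couplings_sets[OF c2] pair_measureI \<Omega>_in_sets)
  also have "\<dots> = emeasure \<nu> (E j)" by (rule emeasure_coupling_fst[OF c2 nu E_sets])
  finally show ?thesis .
qed

lemma nn_integral_cell_snd: "(\<integral>\<^sup>+q. indicator (E j) (snd q) * 1 \<partial>\<pi>1) = emeasure \<nu> (E j)"
proof -
  have "(\<integral>\<^sup>+q. indicator (E j) (snd q) * 1 \<partial>\<pi>1) = (\<integral>\<^sup>+q. indicator (\<Omega> \<times> E j) q \<partial>\<pi>1)"
    by (intro nn_integral_cong) (auto simp: indicator_def couplings_space[OF c1])
  also have "\<dots> = emeasure \<pi>1 (\<Omega> \<times> E j)"
    by (simp add: couplings_sets[OF c1] pair_measureI \<Omega>_in_sets)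
  also have "\<dots> = emeasure \<nu> (E j)" by (rule emeasure_coupling_snd[OF c1 nu E_sets])
  finally show ?thesis .
qed

lemma times_cell_weight_cancel:
  assumes "a \<le> emeasure \<nu> (E j)"
  shows "a * (emeasure \<nu> (E j) * cell_weight j) = a"
proof (cases "measure \<nu> (E j) = 0")
  case True
  then show ?thesis using assms by (simp add: emeasure_\<nu>_eq_measure)
next
  case False
  then show ?thesis using cell_mass_times_weight[of j] by simp
qed

lemma emeasure_glued_fst:
  assumes S: "S \<in> sets M\<Omega>"
  shows "emeasure glued (S \<times> \<Omega>) = emeasure \<mu> S"
proof -
  have rectangle: "S \<times> \<Omega> \<in> sets M\<Omega>\<Omega>" using S by (simp add: pair_measureI \<Omega>_in_sets)
  have cell_sets: "S \<times> E j \<in> sets \<pi>1" for j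
    using S by (simp add: couplings_sets[OF c1] pair_measureI E_sets)
  have cell: "(\<integral>\<^sup>+q. indicator (E j) (snd q) * indicator (S \<times> \<Omega>) q \<partial>\<pi>1) = emeasure \<pi>1 (S \<times> E j)" for j
  proof -
    have "(\<integral>\<^sup>+q. indicator (E j) (snd q) * indicator (S \<times> \<Omega>) q \<partial>\<pi>1) = (\<integral>\<^sup>+q. indicator (S \<times> E j) q \<partial>\<pi>1)"
      using E_subset[of j] by (intro nn_integral_cong) (auto simp: indicator_def)
    then show ?thesis using cell_sets[of j] by simp
  qed
  have cell_le: "emeasure \<pi>1 (S \<times> E j) \<le> emeasure \<nu> (E j)" for j
    using emeasure_mono[of "S \<times> E j" "\<Omega> \<times> E j" \<pi>1] sets_M\<Omega>_subset[OF S]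
    by (auto simp: emeasure_coupling_snd[OF c1 nu E_sets] couplings_sets[OF c1] \<Omega>_in_sets)
  have "emeasure glued (S \<times> \<Omega>) = (\<integral>\<^sup>+p. glue_density p * (indicator (S \<times> \<Omega>) (fst p) * (\<lambda>_. 1) (snd p)) \<partial>\<pi>\<pi>)"
    by (simp add: emeasure_glued[OF rectangle]) (auto intro!: nn_integral_cong simp: space_\<pi>\<pi> indicator_def)
  also have "\<dots> = (\<Sum>j<m. emeasure \<pi>1 (S \<times> E j) * (emeasure \<nu> (E j) * cell_weight j))"
    unfolding nn_integral_glue_density_mult[OF borel_measurable_indicator[OF rectangle] borel_measurable_const]
      cell nn_integral_cell_fst
    by (simp_all add: mult.assoc)
  also have "\<dots> = (\<Sum>j<m. emeasure \<pi>1 (S \<times> E j))" by (simp add: times_cell_weight_cancel cell_le)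
  also have "\<dots> = emeasure \<pi>1 (\<Union>j<m. S \<times> E j)"
    using E_disj cell_sets by (intro sum_emeasure) (auto simp: disjoint_family_on_def)
  also have "(\<Union>j<m. S \<times> E j) = S \<times> \<Omega>" using E_cover by blast
  finally show ?thesis using emeasure_coupling_fst[OF c1 mu S] by simp
qed

lemma emeasure_glued_snd:
  assumes S: "S \<in> sets M\<Omega>"
  shows "emeasure glued (\<Omega> \<times> S) = emeasure \<rho> S"
proof -
  have rectangle: "\<Omega> \<times> S \<in> sets M\<Omega>\<Omega>" using S by (simp add: pair_measureI \<Omega>_in_sets)
  have cell_sets: "E j \<times> S \<in> sets \<pi>2" for j
    using S by (simp add: couplings_sets[OF c2] pair_measureI E_sets)
  have cell: "(\<integral>\<^sup>+q. indicator (E j) (fst q) * indicator (\<Omega> \<times> S) q \<partial>\<pi>2) = emeasure \<pi>2 (E j \<times> S)" for j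
  proof -
    have "(\<integral>\<^sup>+q. indicator (E j) (fst q) * indicator (\<Omega> \<times> S) q \<partial>\<pi>2) = (\<integral>\<^sup>+q. indicator (E j \<times> S) q \<partial>\<pi>2)"
      using E_subset[of j] by (intro nn_integral_cong) (auto simp: indicator_def)
    then show ?thesis using cell_sets[of j] by simp
  qed
  have cell_le: "emeasure \<pi>2 (E j \<times> S) \<le> emeasure \<nu> (E j)" for j
    using emeasure_mono[of "E j \<times> S" "E j \<times> \<Omega>" \<pi>2] sets_M\<Omega>_subset[OF S]
    by (auto simp: emeasure_coupling_fst[OF c2 nu E_sets] couplings_sets[OF c2] \<Omega>_in_sets)
  have "emeasure glued (\<Omega> \<times> S) = (\<integral>\<^sup>+p. glue_density p * ((\<lambda>_. 1) (fst p) * indicator (\<Omega> \<times> S) (snd p)) \<partial>\<pi>\<pi>)"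
    by (simp add: emeasure_glued[OF rectangle]) (auto intro!: nn_integral_cong simp: space_\<pi>\<pi> indicator_def)
  also have "\<dots> = (\<Sum>j<m. emeasure \<pi>2 (E j \<times> S) * (emeasure \<nu> (E j) * cell_weight j))"
    unfolding nn_integral_glue_density_mult[OF borel_measurable_const borel_measurable_indicator[OF rectangle]]
      cell nn_integral_cell_snd
    by (simp_all add: ac_simps)
  also have "\<dots> = (\<Sum>j<m. emeasure \<pi>2 (E j \<times> S))" by (simp add: times_cell_weight_cancel cell_le)
  also have "\<dots> = emeasure \<pi>2 (\<Union>j<m. E j \<times> S)"
    using E_disj cell_sets by (intro sum_emeasure) (auto simp: disjoint_family_on_def)
  also have "(\<Union>j<m. E j \<times> S) = \<Omega> \<times> S" using E_cover by blast
  finally show ?thesis using emeasure_coupling_snd[OF c2 rho S] by simp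
qed

lemma glued_in_couplings: "glued \<in> couplings \<Omega> \<mu> \<rho>"
  by (rule couplings_intro[OF sets_glued mu rho emeasure_glued_fst emeasure_glued_snd])

lemma nn_integral_glue_density_fst_le:
  assumes g[measurable]: "g \<in> borel_measurable M\<Omega>\<Omega>"
  shows "(\<integral>\<^sup>+p. glue_density p * (g (fst p) * 1) \<partial>\<pi>\<pi>) \<le> (\<integral>\<^sup>+q. g q \<partial>\<pi>1)"
proof -
  have "(\<integral>\<^sup>+p. glue_density p * (g (fst p) * (\<lambda>_. 1) (snd p)) \<partial>\<pi>\<pi>) =
      (\<Sum>j<m. (\<integral>\<^sup>+q. indicator (E j) (snd q) * g q \<partial>\<pi>1) * (emeasure \<nu> (E j) * cell_weight j))"
    unfolding nn_integral_glue_density_mult[OF g borel_measurable_const] nn_integral_cell_fst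
    by (simp add: mult.assoc)
  also have "\<dots> \<le> (\<Sum>j<m. (\<integral>\<^sup>+q. indicator (E j) (snd q) * g q \<partial>\<pi>1))"
    using cell_mass_times_weight by (intro sum_mono) (simp add: mult_left_le)
  also have "\<dots> = (\<integral>\<^sup>+q. (\<Sum>j<m. indicator (E j) (snd q) * g q) \<partial>\<pi>1)"
    by (rule nn_integral_sum[symmetric]) (unfold couplings_measurable_eq[OF c1], measurable)
  also have "\<dots> = (\<integral>\<^sup>+q. g q \<partial>\<pi>1)"
    by (intro nn_integral_cong)
      (auto simp: sum_distrib_right[symmetric] sum_indicator_cells couplings_space[OF c1])
  finally show ?thesis by simp
qed

lemma nn_integral_glue_density_snd_le:
  assumes h[measurable]: "h \<in> borel_measurable M\<Omega>\<Omega>"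
  shows "(\<integral>\<^sup>+p. glue_density p * (1 * h (snd p)) \<partial>\<pi>\<pi>) \<le> (\<integral>\<^sup>+q. h q \<partial>\<pi>2)"
proof -
  have "(\<integral>\<^sup>+p. glue_density p * ((\<lambda>_. 1) (fst p) * h (snd p)) \<partial>\<pi>\<pi>) =
      (\<Sum>j<m. (\<integral>\<^sup>+q. indicator (E j) (fst q) * h q \<partial>\<pi>2) * (emeasure \<nu> (E j) * cell_weight j))"
    unfolding nn_integral_glue_density_mult[OF borel_measurable_const h] nn_integral_cell_snd
    by (simp add: ac_simps)
  also have "\<dots> \<le> (\<Sum>j<m. (\<integral>\<^sup>+q. indicator (E j) (fst q) * h q \<partial>\<pi>2))"
    using cell_mass_times_weight by (intro sum_mono) (simp add: mult_left_le)
  also have "\<dots> = (\<integral>\<^sup>+q. (\<Sum>j<m. indicator (E j) (fst q) * h q) \<partial>\<pi>2)"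
    by (rule nn_integral_sum[symmetric]) (unfold couplings_measurable_eq[OF c2], measurable)
  also have "\<dots> = (\<integral>\<^sup>+q. h q \<partial>\<pi>2)"
    by (intro nn_integral_cong)
      (auto simp: sum_distrib_right[symmetric] sum_indicator_cells couplings_space[OF c2])
  finally show ?thesis by simp
qed

lemma nn_integral_glue_density: "(\<integral>\<^sup>+p. glue_density p \<partial>\<pi>\<pi>) = 1"
proof -
  have "(\<integral>\<^sup>+p. glue_density p \<partial>\<pi>\<pi>) = (\<integral>\<^sup>+q. indicator (\<Omega> \<times> \<Omega>) q \<partial>glued)"
    by (subst nn_integral_glued) (auto intro!: nn_integral_cong simp: space_\<pi>\<pi> indicator_def)
  also have "\<dots> = emeasure \<mu> \<Omega>"
    using emeasure_glued_fst[OF \<Omega>_in_sets] by (simp add: sets_glued)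
  also have "\<dots> = 1"
    using prob_space.emeasure_space_1[OF borel_prob_prob_space[OF mu]] borel_prob_space[OF mu] by simp
  finally show ?thesis .
qed

lemma cost_glued_le:
  assumes "0 \<le> \<delta>" and small_cells: "\<And>j x y. x \<in> E j \<Longrightarrow> y \<in> E j \<Longrightarrow> dist x y \<le> \<delta>"
  shows "cost glued \<le> cost \<pi>1 + \<delta> + cost \<pi>2"
proof -
  define D where "D = (\<lambda>q::'a \<times> 'a. ennreal (dist (fst q) (snd q)))"
  have [measurable]: "D \<in> borel_measurable M\<Omega>\<Omega>" unfolding D_def by measurable
  have [measurable]: "(\<lambda>p. D (fst p)) \<in> borel_measurable \<pi>\<pi>" "(\<lambda>p. D (snd p)) \<in> borel_measurable \<pi>\<pi>"
    unfolding measurable_\<pi>\<pi>_eq by measurable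
  have glue_triangle: "glue_density p * D (outer p)
      \<le> glue_density p * (D (fst p) * 1) + glue_density p * ennreal \<delta> + glue_density p * (1 * D (snd p))" for p
  proof (cases "glue_density p = 0")
    case False
    obtain x y y' z where p: "p = ((x, y), (y', z))" by (metis prod.collapse)
    from False obtain j where "indicator (E j) y * indicator (E j) y' * cell_weight j \<noteq> (0::ennreal)"
      unfolding glue_density_def p by (auto elim: sum.not_neutral_contains_not_neutral)
    then have "dist y y' \<le> \<delta>" by (intro small_cells[of y j y']) (auto simp: indicator_def split: if_splits)
    then have "dist x z \<le> dist x y + \<delta> + dist y' z"
      using dist_triangle[of x z y] dist_triangle[of y z y'] by linarith
    then have "D (outer p) \<le> D (fst p) + ennreal \<delta> + D (snd p)"
      using \<open>0 \<le> \<delta>\<close> by (simp add: p D_def ennreal_plus[symmetric] del: ennreal_plus)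
    then show ?thesis by (simp add: distrib_left[symmetric] mult_left_mono)
  qed simp
  have "ennreal (cost glued) = (\<integral>\<^sup>+q. D q \<partial>glued)"
    unfolding D_def by (rule nn_integral_dist_coupling[OF glued_in_couplings, symmetric])
  also have "\<dots> = (\<integral>\<^sup>+p. glue_density p * D (outer p) \<partial>\<pi>\<pi>)" by (simp add: nn_integral_glued)
  also have "\<dots> \<le> (\<integral>\<^sup>+p. glue_density p * (D (fst p) * 1) + glue_density p * ennreal \<delta>
      + glue_density p * (1 * D (snd p)) \<partial>\<pi>\<pi>)"
    by (intro nn_integral_mono glue_triangle)
  also have "\<dots> = (\<integral>\<^sup>+p. glue_density p * (D (fst p) * 1) + glue_density p * ennreal \<delta> \<partial>\<pi>\<pi>)
      + (\<integral>\<^sup>+p. glue_density p * (1 * D (snd p)) \<partial>\<pi>\<pi>)"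
    by (rule nn_integral_add) measurable
  also have "(\<integral>\<^sup>+p. glue_density p * (D (fst p) * 1) + glue_density p * ennreal \<delta> \<partial>\<pi>\<pi>)
      = (\<integral>\<^sup>+p. glue_density p * (D (fst p) * 1) \<partial>\<pi>\<pi>) + ennreal \<delta>"
    by (subst nn_integral_add) (measurable, simp add: nn_integral_multc nn_integral_glue_density)
  also have "(\<integral>\<^sup>+p. glue_density p * (D (fst p) * 1) \<partial>\<pi>\<pi>) + ennreal \<delta>
      + (\<integral>\<^sup>+p. glue_density p * (1 * D (snd p)) \<partial>\<pi>\<pi>)
      \<le> (\<integral>\<^sup>+q. D q \<partial>\<pi>1) + ennreal \<delta> + (\<integral>\<^sup>+q. D q \<partial>\<pi>2)"
    by (intro add_mono nn_integral_glue_density_fst_le nn_integral_glue_density_snd_le) simp_all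
  also have "\<dots> = ennreal (cost \<pi>1 + \<delta> + cost \<pi>2)"
    using \<open>0 \<le> \<delta>\<close> cost_nonneg unfolding D_def
    by (simp add: nn_integral_dist_coupling[OF c1] nn_integral_dist_coupling[OF c2] ennreal_plus)
  finally show ?thesis
    using ennreal_le_iff[of "cost \<pi>1 + \<delta> + cost \<pi>2" "cost glued"] \<open>0 \<le> \<delta>\<close> cost_nonneg by simp
qed

end

context compact_domain begin

lemma W1_triangle:
  assumes mu: "\<mu> \<in> borel_prob \<Omega>" and nu: "\<nu> \<in> borel_prob \<Omega>" and rho: "\<rho> \<in> borel_prob \<Omega>"
  shows "W1 \<Omega> \<mu> \<rho> \<le> W1 \<Omega> \<mu> \<nu> + W1 \<Omega> \<nu> \<rho>"
proof (rule field_le_epsilon)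
  fix e :: real assume e: "0 < e"
  obtain \<pi>1 where c1: "\<pi>1 \<in> couplings \<Omega> \<mu> \<nu>" and h1: "cost \<pi>1 < W1 \<Omega> \<mu> \<nu> + e/3"
    using W1_near_optimal_coupling[OF mu nu, of "e/3"] e by auto
  obtain \<pi>2 where c2: "\<pi>2 \<in> couplings \<Omega> \<nu> \<rho>" and h2: "cost \<pi>2 < W1 \<Omega> \<nu> \<rho> + e/3"
    using W1_near_optimal_coupling[OF nu rho, of "e/3"] e by auto
  have e3: "0 < e/3" using e by simp
  obtain E :: "nat \<Rightarrow> 'a set" and m :: nat where
    E: "\<And>j. E j \<in> sets M\<Omega>" "disjoint_family_on E {..<m}" "(\<Union>j<m. E j) = \<Omega>"
       "\<And>j x y. x \<in> E j \<Longrightarrow> y \<in> E j \<Longrightarrow> dist x y \<le> e/3"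
    by (rule small_measurable_partition[OF e3]) blast
  interpret g: coupling_gluing \<Omega> \<mu> \<nu> \<rho> \<pi>1 \<pi>2 m E
    by (intro coupling_gluing.intro coupling_gluing_axioms.intro compact_domain_axioms mu nu rho c1 c2 E)
  have "W1 \<Omega> \<mu> \<rho> \<le> cost g.glued" by (rule W1_le_cost[OF g.glued_in_couplings])
  also have "\<dots> \<le> cost \<pi>1 + e/3 + cost \<pi>2" by (rule g.cost_glued_le) (use e E in auto)
  finally show "W1 \<Omega> \<mu> \<rho> \<le> W1 \<Omega> \<mu> \<nu> + W1 \<Omega> \<nu> \<rho> + e" using h1 h2 by linarith
qed

end

section \<open>Transfer operators of iterated contraction systems\<close>

lemma sum_mset_image_mset_list: "sum_mset (image_mset g (mset xs)) = (\<Sum>i<length xs. g (xs!i))"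
  by (induction xs) (simp_all add: sum.lessThan_Suc_shift del: sum.lessThan_Suc)

lemma tendsto_sum_mset:
  fixes f :: "nat \<Rightarrow> 'b \<Rightarrow> real"
  shows "(\<And>y. y \<in># M \<Longrightarrow> (\<lambda>n. f n y) \<longlonglongrightarrow> g y) \<Longrightarrow>
   (\<lambda>n. sum_mset (image_mset (f n) M)) \<longlonglongrightarrow> sum_mset (image_mset g M)"
proof (induction M)
  case empty then show ?case by simp
next
  case (add x M)
  have "(\<lambda>n. f n x) \<longlonglongrightarrow> g x" using add.prems by simp
  moreover have "(\<lambda>n. sum_mset (image_mset (f n) M)) \<longlonglongrightarrow> sum_mset (image_mset g M)"
    using add.IH add.prems by simp
  ultimately show ?case by (simp add: tendsto_add)
qed

lemma sum_mset_image_diff: "sum_mset (image_mset (\<lambda>y. f y - g y) M) = sum_mset (image_mset f M) - (sum_mset (image_mset g M) :: real)"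
  by (induction M) auto

lemma sum_mset_image_sum: "sum_mset (image_mset (\<lambda>y. \<Sum>i\<in>I. f i y) M) = (\<Sum>i\<in>I. (sum_mset (image_mset (f i) M) :: real))"
  by (induction M) (auto simp: sum.distrib)

lemma sum_mset_nonneg: "(\<And>y. y \<in># M \<Longrightarrow> 0 \<le> f y) \<Longrightarrow> 0 \<le> sum_mset (image_mset f M :: real multiset)"
  by (induction M) auto

locale iterated_contraction_system = compact_domain +
  fixes F :: "'a \<Rightarrow> 'a multiset" and k :: nat and \<theta> :: real
  assumes iterated_contraction_system: "is_ICS \<Omega> k \<theta> F" and \<theta>_le_1: "\<theta> \<le> 1"
begin

lemma F_subset: "x \<in> \<Omega> \<Longrightarrow> set_mset (F x) \<subseteq> \<Omega>"
  using iterated_contraction_system by (auto simp: is_ICS_def)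

lemma size_F: "x \<in> \<Omega> \<Longrightarrow> size (F x) = k"
  using iterated_contraction_system by (auto simp: is_ICS_def)

lemma F_matching:
  assumes "x \<in> \<Omega>" "x' \<in> \<Omega>"
  obtains xs xs' where "mset xs = F x" "mset xs' = F x'" "length xs = k" "length xs' = k"
    "\<And>i. i < k \<Longrightarrow> xs ! i \<in> \<Omega> \<and> xs' ! i \<in> \<Omega> \<and> dist (xs ! i) (xs' ! i) \<le> \<theta> * dist x x'"
proof -
  obtain xs xs' where xs: "mset xs = F x" and xs': "mset xs' = F x'"
    and close: "\<forall>i<k. dist (xs ! i) (xs' ! i) \<le> \<theta> * dist x x'"
    using iterated_contraction_system assms unfolding is_ICS_def by blast
  have "length xs = k" "length xs' = k" using size_F assms xs xs' by (metis size_mset)+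
  moreover have "xs ! i \<in> \<Omega>" "xs' ! i \<in> \<Omega>" if "i < k" for i
    using F_subset assms xs xs' that \<open>length xs = k\<close> \<open>length xs' = k\<close>
    by (metis nth_mem set_mset_mset subsetD)+
  ultimately show ?thesis using that xs xs' close by blast
qed

lemma continuous_on_sum_mset_F:
  fixes g :: "'a \<Rightarrow> real"
  assumes g: "continuous_on \<Omega> g"
  shows "continuous_on \<Omega> (\<lambda>x. \<Sum>y\<in>#F x. g y)"
proof (rule uniformly_continuous_imp_continuous, unfold uniformly_continuous_on_def, intro allI impI)
  fix e :: real assume "0 < e"
  then have "0 < e / (k + 1)" by simp
  then obtain d where "0 < d"
    and d: "\<forall>y\<in>\<Omega>. \<forall>y'\<in>\<Omega>. dist y' y < d \<longrightarrow> dist (g y') (g y) < e / (k + 1)"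
    using compact_uniformly_continuous[OF g \<Omega>_compact] unfolding uniformly_continuous_on_def by metis
  have "dist (\<Sum>y\<in>#F x. g y) (\<Sum>y\<in>#F x'. g y) < e"
    if x: "x \<in> \<Omega>" and x': "x' \<in> \<Omega>" and "dist x x' < d" for x x'
  proof -
    obtain xs xs' where xs: "mset xs = F x" "mset xs' = F x'" "length xs = k" "length xs' = k"
      and match: "\<And>i. i < k \<Longrightarrow> xs ! i \<in> \<Omega> \<and> xs' ! i \<in> \<Omega> \<and> dist (xs ! i) (xs' ! i) \<le> \<theta> * dist x x'"
      using F_matching[OF x x'] by blast
    have close: "\<bar>g (xs ! i) - g (xs' ! i)\<bar> < e / (k + 1)" if "i < k" for i
    proof -
      have "dist (xs ! i) (xs' ! i) \<le> dist x x'"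
        using match[OF that] mult_right_mono[OF \<theta>_le_1 zero_le_dist[of x x']] by simp
      then show ?thesis using d match[OF that] \<open>dist x x' < d\<close> by (simp add: dist_real_def)
    qed
    have "dist (\<Sum>y\<in>#F x. g y) (\<Sum>y\<in>#F x'. g y) = \<bar>\<Sum>i<k. g (xs ! i) - g (xs' ! i)\<bar>"
      using xs(3,4) by (simp add: xs(1,2)[symmetric] dist_real_def sum_mset_image_mset_list sum_subtractf)
    also have "\<dots> \<le> (\<Sum>i<k. \<bar>g (xs ! i) - g (xs' ! i)\<bar>)" by (rule sum_abs)
    also have "\<dots> \<le> (\<Sum>i<k. e / (k + 1))" by (intro sum_mono less_imp_le close) simp
    also have "\<dots> < e" using \<open>0 < e\<close> by (simp add: field_simps)
    finally show ?thesis .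
  qed
  with \<open>0 < d\<close> show "\<exists>d>0. \<forall>x\<in>\<Omega>. \<forall>x'\<in>\<Omega>. dist x' x < d \<longrightarrow>
      dist (\<Sum>y\<in>#F x'. g y) (\<Sum>y\<in>#F x. g y) < e"
    by (metis dist_commute)
qed

lemma borel_measurable_sum_mset_F: "continuous_on \<Omega> (g :: 'a \<Rightarrow> real) \<Longrightarrow> (\<lambda>x. sum_mset (image_mset g (F x))) \<in> borel_measurable M\<Omega>"
  using continuous_on_sum_mset_F borel_measurable_continuous_on_restrict by blast

text \<open>\<open>transfer_mass w S x\<close> is the transfer operator with weight \<open>w\<close> applied to the indicator of
  \<open>S\<close>; \<open>transfer_measure w \<nu>\<close> is its dual applied to \<open>\<nu>\<close>, so that \<open>w = exp \<circ> A\<close> gives \<open>L\<^sub>A\<^sup>* \<nu>\<close>.\<close>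

definition transfer_mass :: "('a \<Rightarrow> real) \<Rightarrow> 'a set \<Rightarrow> 'a \<Rightarrow> real" where
  "transfer_mass w S x = sum_mset (image_mset (\<lambda>y. w y * indicator S y) (F x))"

lemma transfer_mass_sums: "disjoint_family A \<Longrightarrow> (\<lambda>i. transfer_mass w (A i) x) sums transfer_mass w (\<Union>i. A i) x"
proof -
  assume dA: "disjoint_family A"
  have eq: "(\<Sum>i<n. transfer_mass w (A i) x) = sum_mset (image_mset (\<lambda>y. w y * indicator (\<Union>i<n. A i) y) (F x))" for n
  proof -
    have "(\<Sum>i<n. transfer_mass w (A i) x) = sum_mset (image_mset (\<lambda>y. \<Sum>i<n. w y * indicator (A i) y) (F x))"
      unfolding transfer_mass_def by (rule sum_mset_image_sum[symmetric])
    also have "\<dots> = sum_mset (image_mset (\<lambda>y. w y * indicator (\<Union>i<n. A i) y) (F x))"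
    proof -
      have disj: "disjoint_family_on A {..<n}" using dA by (auto simp: disjoint_family_on_def)
      have h: "(\<Sum>i<n. w y * indicator (A i) y) = w y * indicator (\<Union>i<n. A i) y" for y
      proof -
        have "(\<Sum>i<n. w y * indicator (A i) y) = w y * (\<Sum>i<n. indicator (A i) y)"
          by (rule sum_distrib_left[symmetric])
        also have "(\<Sum>i<n. indicator (A i) y) = (indicator (\<Union>i<n. A i) y :: real)"
          by (rule indicator_UN_disjoint[symmetric]) (simp_all add: disj)
        finally show ?thesis .
      qed
      show ?thesis by (intro arg_cong[where f=sum_mset] image_mset_cong) (rule h)
    qed
    finally show ?thesis .
  qed
  show ?thesis unfolding sums_def eq
    unfolding transfer_mass_def by (intro tendsto_sum_mset tendsto_mult tendsto_const LIMSEQ_indicator_UN)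
qed

lemma borel_measurable_transfer_mass_open:
  assumes w: "continuous_on \<Omega> w" and U: "open U" "U \<noteq> UNIV"
  shows "transfer_mass w U \<in> borel_measurable M\<Omega>"
proof (rule borel_measurable_LIMSEQ_real)
  let ?u = "\<lambda>n y. min 1 (real (Suc n) * infdist y (- U))"
  show "(\<lambda>x. \<Sum>y\<in>#F x. w y * ?u n y) \<in> borel_measurable M\<Omega>" for n
    by (intro borel_measurable_sum_mset_F continuous_intros w)
  fix x
  show "(\<lambda>n. \<Sum>y\<in>#F x. w y * ?u n y) \<longlonglongrightarrow> transfer_mass w U x"
    unfolding transfer_mass_def
  proof (intro tendsto_sum_mset tendsto_mult tendsto_const)
    fix y
    show "(\<lambda>n. ?u n y) \<longlonglongrightarrow> indicator U y"
    proof (cases "y \<in> U")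
      case True
      have pos: "0 < infdist y (- U)"
        using True U by (intro infdist_pos_not_in_closed) (auto simp: closed_Compl)
      obtain N where N: "inverse (real (Suc N)) < infdist y (- U)"
        using reals_Archimedean[OF pos] by blast
      have "?u n y = 1" if "N \<le> n" for n
      proof -
        have "1 < real (Suc N) * infdist y (- U)" using N by (simp add: field_simps)
        also have "\<dots> \<le> real (Suc n) * infdist y (- U)" using that pos by (intro mult_right_mono) auto
        finally show ?thesis by simp
      qed
      then show ?thesis using True by (intro tendsto_eventually eventually_sequentiallyI) simp
    qed simp
  qed
qed

lemma borel_measurable_transfer_mass_borel_set:
  assumes w: "continuous_on \<Omega> w" and B: "B \<in> sets borel"
  shows "transfer_mass w B \<in> borel_measurable M\<Omega>"
proof -
  have univ: "transfer_mass w UNIV \<in> borel_measurable M\<Omega>"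
    unfolding transfer_mass_def using borel_measurable_sum_mset_F[OF w] by simp
  have "Int_stable {S::'a set. open S}" "{S::'a set. open S} \<subseteq> Pow UNIV" "B \<in> sigma_sets UNIV {S. open S}"
    using B by (auto simp: Int_stable_def sets_borel)
  then show ?thesis
  proof (induction rule: sigma_sets_induct_disjoint)
    case (basic U)
    then show ?case using univ borel_measurable_transfer_mass_open[OF w] by (cases "U = UNIV") auto
  next
    case empty
    show ?case by (simp add: transfer_mass_def)
  next
    case (compl A)
    have "transfer_mass w (UNIV - A) x = transfer_mass w UNIV x - transfer_mass w A x" for x
      unfolding transfer_mass_def sum_mset_image_diff[symmetric]
      by (intro arg_cong[where f=sum_mset] image_mset_cong) (simp add: indicator_def)
    then show ?case using univ compl.IH by simp
  next
    case (union A)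
    have "(\<lambda>n. \<Sum>i<n. transfer_mass w (A i) x) \<longlonglongrightarrow> transfer_mass w (\<Union>(range A)) x" for x
      using transfer_mass_sums[OF union.hyps(1)] by (simp add: sums_def)
    then show ?case
      by (rule borel_measurable_LIMSEQ_real) (use union.IH in \<open>intro borel_measurable_sum\<close>)
  qed
qed

lemma \<Omega>_borel: "\<Omega> \<in> sets borel"
  using \<Omega>_compact by (simp add: compact_imp_closed borel_closed)

lemma sets_M\<Omega>_iff: "S \<in> sets M\<Omega> \<longleftrightarrow> S \<subseteq> \<Omega> \<and> S \<in> sets borel"
  using \<Omega>_borel by (intro sets_restrict_space_iff) simp

lemma borel_measurable_transfer_mass:
  assumes w: "continuous_on \<Omega> w" and S: "S \<in> sets M\<Omega>"
  shows "transfer_mass w S \<in> borel_measurable M\<Omega>"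
  using borel_measurable_transfer_mass_borel_set[OF w] S sets_M\<Omega>_iff by blast

lemma transfer_mass_nonneg:
  assumes "\<And>y. y \<in> \<Omega> \<Longrightarrow> 0 \<le> w y" "x \<in> \<Omega>"
  shows "0 \<le> transfer_mass w S x"
  unfolding transfer_mass_def using assms F_subset[OF assms(2)] by (intro sum_mset_nonneg) auto

definition transfer_measure :: "('a \<Rightarrow> real) \<Rightarrow> 'a measure \<Rightarrow> 'a measure" where
  "transfer_measure w \<nu> = measure_of \<Omega> (sets M\<Omega>) (\<lambda>S. \<integral>\<^sup>+x. ennreal (transfer_mass w S x) \<partial>\<nu>)"

lemma transfer_dual_eq_transfer_measure: "transfer_dual \<Omega> F A \<nu> = transfer_measure (\<lambda>y. exp (A y)) \<nu>"
  by (simp add: transfer_dual_def transfer_measure_def transfer_op_def transfer_mass_def)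

lemma sets_M\<Omega>_Pow: "sets M\<Omega> \<subseteq> Pow \<Omega>"
  using sets.space_closed[of M\<Omega>] by simp

lemma sets_transfer_measure: "sets (transfer_measure w \<nu>) = sets M\<Omega>"
proof -
  have "sets (transfer_measure w \<nu>) = sigma_sets \<Omega> (sets M\<Omega>)"
    unfolding transfer_measure_def by (rule sets_measure_of[OF sets_M\<Omega>_Pow])
  also have "\<dots> = sets M\<Omega>" using sets.sigma_sets_eq[of M\<Omega>] by simp
  finally show ?thesis .
qed

lemma space_transfer_measure: "space (transfer_measure w \<nu>) = \<Omega>"
  using sets_eq_imp_space_eq[OF sets_transfer_measure] by simp

lemma emeasure_transfer_measure:
  assumes nu: "sets \<nu> = sets M\<Omega>" and w: "continuous_on \<Omega> w" and wp: "\<And>y. y \<in> \<Omega> \<Longrightarrow> 0 \<le> w y"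
    and S: "S \<in> sets M\<Omega>"
  shows "emeasure (transfer_measure w \<nu>) S = (\<integral>\<^sup>+x. ennreal (transfer_mass w S x) \<partial>\<nu>)"
proof -
  have spn: "space \<nu> = \<Omega>" using sets_eq_imp_space_eq[OF nu] by simp
  have mm: "(\<lambda>x. ennreal (transfer_mass w T x)) \<in> borel_measurable \<nu>" if "T \<in> sets M\<Omega>" for T
    using measurable_compose[OF borel_measurable_transfer_mass[OF w that] measurable_ennreal]
    by (simp add: measurable_cong_sets[OF nu refl])
  show ?thesis
  proof (rule emeasure_measure_of[OF transfer_measure_def sets_M\<Omega>_Pow])
    show "positive (sets (transfer_measure w \<nu>)) (\<lambda>S. \<integral>\<^sup>+x. ennreal (transfer_mass w S x) \<partial>\<nu>)"
      by (simp add: positive_def transfer_mass_def)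
    show "countably_additive (sets (transfer_measure w \<nu>)) (\<lambda>S. \<integral>\<^sup>+x. ennreal (transfer_mass w S x) \<partial>\<nu>)"
      unfolding countably_additive_def
    proof (intro allI impI)
      fix A :: "nat \<Rightarrow> 'a set"
      assume A: "range A \<subseteq> sets (transfer_measure w \<nu>)" and dA: "disjoint_family A"
      have A': "A i \<in> sets M\<Omega>" for i using A sets_transfer_measure by auto
      have "(\<Sum>i. \<integral>\<^sup>+x. ennreal (transfer_mass w (A i) x) \<partial>\<nu>) = (\<integral>\<^sup>+x. (\<Sum>i. ennreal (transfer_mass w (A i) x)) \<partial>\<nu>)"
        by (rule nn_integral_suminf[symmetric]) (rule mm[OF A'])
      also have "\<dots> = (\<integral>\<^sup>+x. ennreal (transfer_mass w (\<Union>(range A)) x) \<partial>\<nu>)"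
      proof (intro nn_integral_cong)
        fix x assume "x \<in> space \<nu>"
        then have x: "x \<in> \<Omega>" using spn by simp
        have mass_sums: "(\<lambda>i. transfer_mass w (A i) x) sums transfer_mass w (\<Union>i. A i) x" by (rule transfer_mass_sums[OF dA])
        show "(\<Sum>i. ennreal (transfer_mass w (A i) x)) = ennreal (transfer_mass w (\<Union>(range A)) x)"
          using suminf_ennreal2[OF transfer_mass_nonneg[OF wp x] sums_summable[OF mass_sums]] sums_unique[OF mass_sums]
          by simp
      qed
      finally show "(\<Sum>i. \<integral>\<^sup>+x. ennreal (transfer_mass w (A i) x) \<partial>\<nu>) = (\<integral>\<^sup>+x. ennreal (transfer_mass w (\<Union>(range A)) x) \<partial>\<nu>)" .
    qed
    show "S \<in> sets (transfer_measure w \<nu>)" using S sets_transfer_measure by simp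
  qed
qed

lemma transfer_mass_\<Omega>: "x \<in> \<Omega> \<Longrightarrow> transfer_mass w \<Omega> x = sum_mset (image_mset w (F x))"
  unfolding transfer_mass_def using F_subset[of x]
  by (intro arg_cong[where f=sum_mset] image_mset_cong) (auto simp: indicator_def)

lemma emeasure_transfer_measure_\<Omega>:
  assumes nu: "sets \<nu> = sets M\<Omega>" and w: "continuous_on \<Omega> w" and wp: "\<And>y. y \<in> \<Omega> \<Longrightarrow> 0 \<le> w y"
  shows "emeasure (transfer_measure w \<nu>) \<Omega> = (\<integral>\<^sup>+x. ennreal (sum_mset (image_mset w (F x))) \<partial>\<nu>)"
proof -
  have spn: "space \<nu> = \<Omega>" using sets_eq_imp_space_eq[OF nu] by simp
  have "emeasure (transfer_measure w \<nu>) \<Omega> = (\<integral>\<^sup>+x. ennreal (transfer_mass w \<Omega> x) \<partial>\<nu>)"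
    by (rule emeasure_transfer_measure[OF nu w wp \<Omega>_in_sets])
  also have "\<dots> = (\<integral>\<^sup>+x. ennreal (sum_mset (image_mset w (F x))) \<partial>\<nu>)"
    by (intro nn_integral_cong) (simp add: spn transfer_mass_\<Omega>)
  finally show ?thesis .
qed

lemma emeasure_transfer_measure_add:
  assumes nu: "sets \<nu> = sets M\<Omega>" and w1: "continuous_on \<Omega> w1" and wp1: "\<And>y. y \<in> \<Omega> \<Longrightarrow> 0 \<le> w1 y"
    and w2: "continuous_on \<Omega> w2" and wp2: "\<And>y. y \<in> \<Omega> \<Longrightarrow> 0 \<le> w2 y" and S: "S \<in> sets M\<Omega>"
  shows "emeasure (transfer_measure (\<lambda>y. w1 y + w2 y) \<nu>) S = emeasure (transfer_measure w1 \<nu>) S + emeasure (transfer_measure w2 \<nu>) S"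
proof -
  have spn: "space \<nu> = \<Omega>" using sets_eq_imp_space_eq[OF nu] by simp
  have mm: "(\<lambda>x. ennreal (transfer_mass w S x)) \<in> borel_measurable \<nu>" if "continuous_on \<Omega> w" for w
    using measurable_compose[OF borel_measurable_transfer_mass[OF that S] measurable_ennreal]
    by (simp add: measurable_cong_sets[OF nu refl])
  have w12: "continuous_on \<Omega> (\<lambda>y. w1 y + w2 y)" using w1 w2 by (intro continuous_intros)
  have "emeasure (transfer_measure (\<lambda>y. w1 y + w2 y) \<nu>) S = (\<integral>\<^sup>+x. ennreal (transfer_mass (\<lambda>y. w1 y + w2 y) S x) \<partial>\<nu>)"
    using emeasure_transfer_measure[OF nu w12 _ S] wp1 wp2 by (simp add: add_nonneg_nonneg)
  also have "\<dots> = (\<integral>\<^sup>+x. ennreal (transfer_mass w1 S x) + ennreal (transfer_mass w2 S x) \<partial>\<nu>)"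
  proof (intro nn_integral_cong)
    fix x assume "x \<in> space \<nu>"
    then have x: "x \<in> \<Omega>" using spn by simp
    have "transfer_mass (\<lambda>y. w1 y + w2 y) S x = transfer_mass w1 S x + transfer_mass w2 S x"
      unfolding transfer_mass_def by (simp add: distrib_right sum_mset.distrib)
    then show "ennreal (transfer_mass (\<lambda>y. w1 y + w2 y) S x) = ennreal (transfer_mass w1 S x) + ennreal (transfer_mass w2 S x)"
      using transfer_mass_nonneg[OF wp1 x] transfer_mass_nonneg[OF wp2 x] by (simp add: ennreal_plus)
  qed
  also have "\<dots> = (\<integral>\<^sup>+x. ennreal (transfer_mass w1 S x) \<partial>\<nu>) + (\<integral>\<^sup>+x. ennreal (transfer_mass w2 S x) \<partial>\<nu>)"
    by (rule nn_integral_add[OF mm[OF w1] mm[OF w2]])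
  also have "\<dots> = emeasure (transfer_measure w1 \<nu>) S + emeasure (transfer_measure w2 \<nu>) S"
    using emeasure_transfer_measure[OF nu w1 wp1 S] emeasure_transfer_measure[OF nu w2 wp2 S] by simp
  finally show ?thesis .
qed

lemma transfer_dual_borel_prob:
  assumes nuB: "\<nu> \<in> borel_prob \<Omega>" and A: "continuous_on \<Omega> A" and nA: "normalized \<Omega> F A"
  shows "transfer_dual \<Omega> F A \<nu> \<in> borel_prob \<Omega>"
proof -
  have nu: "sets \<nu> = sets M\<Omega>" using borel_prob_sets[OF nuB] .
  interpret prob_space \<nu> using borel_prob_prob_space[OF nuB] .
  have wc: "continuous_on \<Omega> (\<lambda>y. exp (A y))" using A by (intro continuous_intros)
  have spn: "space \<nu> = \<Omega>" using sets_eq_imp_space_eq[OF nu] by simp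
  have "emeasure (transfer_measure (\<lambda>y. exp (A y)) \<nu>) (space (transfer_measure (\<lambda>y. exp (A y)) \<nu>)) =
      (\<integral>\<^sup>+x. ennreal (sum_mset (image_mset (\<lambda>y. exp (A y)) (F x))) \<partial>\<nu>)"
    using emeasure_transfer_measure_\<Omega>[OF nu wc] by (simp add: space_transfer_measure)
  also have "\<dots> = (\<integral>\<^sup>+x. 1 \<partial>\<nu>)"
    using nA by (intro nn_integral_cong) (simp add: normalized_def spn)
  also have "\<dots> = 1" by (simp add: emeasure_space_1)
  finally have "prob_space (transfer_measure (\<lambda>y. exp (A y)) \<nu>)" by (rule prob_spaceI)
  then show ?thesis unfolding borel_prob_def transfer_dual_eq_transfer_measure using sets_transfer_measure by simp
qed

end

section \<open>Coupling two transfer measures\<close>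

lemma exp_minus_min_exp_le: "exp a - min (exp a) (exp b) \<le> \<bar>a - b\<bar> * exp (a::real)"
proof (cases "b < a")
  case True
  have "exp a - exp b = exp a * (1 - exp (b - a))" by (simp add: exp_diff field_simps)
  also have "\<dots> \<le> exp a * (a - b)"
    by (intro mult_left_mono) (use exp_ge_add_one_self[of "b - a"] in linarith, simp)
  finally show ?thesis using True by (simp add: min_def mult.commute)
qed (simp add: min_def)

definition add_measure :: "'b measure \<Rightarrow> 'b measure \<Rightarrow> 'b measure" where
  "add_measure P Q = measure_of (space P) (sets P) (\<lambda>S. emeasure P S + emeasure Q S)"

lemma sets_add_measure: "sets (add_measure P Q) = sets P"
proof -
  have "sets (add_measure P Q) = sigma_sets (space P) (sets P)"
    unfolding add_measure_def by (rule sets_measure_of[OF sets.space_closed])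
  also have "\<dots> = sets P" by (rule sets.sigma_sets_eq)
  finally show ?thesis .
qed

lemma emeasure_add_measure:
  assumes QP: "sets Q = sets P" and S: "S \<in> sets P"
  shows "emeasure (add_measure P Q) S = emeasure P S + emeasure Q S"
proof (rule emeasure_measure_of[OF add_measure_def sets.space_closed])
  show "positive (sets (add_measure P Q)) (\<lambda>S. emeasure P S + emeasure Q S)"
    by (simp add: positive_def)
  show "countably_additive (sets (add_measure P Q)) (\<lambda>S. emeasure P S + emeasure Q S)"
    unfolding countably_additive_def sets_add_measure
  proof (intro allI impI)
    fix A :: "nat \<Rightarrow> _" assume A: "range A \<subseteq> sets P" and dA: "disjoint_family A"
    have A': "range A \<subseteq> sets Q" using A QP by simp
    show "(\<Sum>i. emeasure P (A i) + emeasure Q (A i)) = emeasure P (\<Union>(range A)) + emeasure Q (\<Union>(range A))"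
      using suminf_add[OF summableI summableI, of "\<lambda>i. emeasure P (A i)" "\<lambda>i. emeasure Q (A i)"]
        suminf_emeasure[OF A dA] suminf_emeasure[OF A' dA] by simp
  qed
  show "S \<in> sets (add_measure P Q)" using S by (simp add: sets_add_measure)
qed

lemma ennreal_divide_mult_cancel:
  assumes "0 \<le> s" "a \<le> ennreal s"
  shows "ennreal (1 / s) * (a * ennreal s) = a"
proof (cases "s = 0")
  case False
  then have "ennreal (1 / s) * ennreal s = 1" using assms(1) by (simp flip: ennreal_mult)
  then show ?thesis by (simp add: mult.left_commute)
qed (use assms in simp)

locale potential_pair = iterated_contraction_system +
  fixes A B :: "'a \<Rightarrow> real" and \<epsilon> :: real and \<nu> :: "'a measure"
  assumes A_continuous: "continuous_on \<Omega> A" and B_continuous: "continuous_on \<Omega> B"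
    and A_normalized: "normalized \<Omega> F A" and B_normalized: "normalized \<Omega> F B"
    and A_B_close: "\<And>y. y \<in> \<Omega> \<Longrightarrow> \<bar>A y - B y\<bar> \<le> \<epsilon>" and \<nu>_borel_prob: "\<nu> \<in> borel_prob \<Omega>"
begin

definition "wA y = exp (A y)"
definition "wB y = exp (B y)"
definition "w_common y = min (wA y) (wB y)"
definition "wA_excess y = wA y - w_common y"
definition "wB_excess y = wB y - w_common y"

abbreviation "LA \<equiv> transfer_measure wA \<nu>"
abbreviation "LB \<equiv> transfer_measure wB \<nu>"
abbreviation "L_common \<equiv> transfer_measure w_common \<nu>"
abbreviation "LA_excess \<equiv> transfer_measure wA_excess \<nu>"
abbreviation "LB_excess \<equiv> transfer_measure wB_excess \<nu>"

lemma \<epsilon>_nonneg: "0 \<le> \<epsilon>"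
proof -
  obtain y where "y \<in> \<Omega>" using \<Omega>_nonempty by blast
  then show ?thesis using A_B_close[of y] by linarith
qed

lemma sets_\<nu>: "sets \<nu> = sets M\<Omega>" using borel_prob_sets[OF \<nu>_borel_prob] .
lemma space_\<nu>: "space \<nu> = \<Omega>" using borel_prob_space[OF \<nu>_borel_prob] .

lemma continuous_weights:
  "continuous_on \<Omega> wA" "continuous_on \<Omega> wB" "continuous_on \<Omega> w_common"
  "continuous_on \<Omega> wA_excess" "continuous_on \<Omega> wB_excess"
  unfolding wA_excess_def wB_excess_def w_common_def wA_def wB_def
  using A_continuous B_continuous by (auto intro!: continuous_intros)

lemma weights_nonneg: "0 \<le> w_common y" "0 \<le> wA_excess y" "0 \<le> wB_excess y"
  by (simp_all add: wA_excess_def wB_excess_def w_common_def wA_def wB_def)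

lemma transfer_dual_A: "transfer_dual \<Omega> F A \<nu> = LA"
  unfolding transfer_dual_eq_transfer_measure wA_def ..

lemma transfer_dual_B: "transfer_dual \<Omega> F B \<nu> = LB"
  unfolding transfer_dual_eq_transfer_measure wB_def ..

lemma LA_borel_prob: "LA \<in> borel_prob \<Omega>"
  using transfer_dual_borel_prob[OF \<nu>_borel_prob A_continuous A_normalized] by (simp add: transfer_dual_A)

lemma LB_borel_prob: "LB \<in> borel_prob \<Omega>"
  using transfer_dual_borel_prob[OF \<nu>_borel_prob B_continuous B_normalized] by (simp add: transfer_dual_B)

lemma emeasure_LA_split:
  assumes "S \<in> sets M\<Omega>"
  shows "emeasure LA S = emeasure L_common S + emeasure LA_excess S"
proof -
  have "(\<lambda>y. w_common y + wA_excess y) = wA" by (simp add: wA_excess_def)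
  moreover have "emeasure (transfer_measure (\<lambda>y. w_common y + wA_excess y) \<nu>) S
      = emeasure L_common S + emeasure LA_excess S"
    by (rule emeasure_transfer_measure_add[OF sets_\<nu> continuous_weights(3) _ continuous_weights(4) _ assms])
      (simp_all add: weights_nonneg)
  ultimately show ?thesis by simp
qed

lemma emeasure_LB_split:
  assumes "S \<in> sets M\<Omega>"
  shows "emeasure LB S = emeasure L_common S + emeasure LB_excess S"
proof -
  have "(\<lambda>y. w_common y + wB_excess y) = wB" by (simp add: wB_excess_def)
  moreover have "emeasure (transfer_measure (\<lambda>y. w_common y + wB_excess y) \<nu>) S
      = emeasure L_common S + emeasure LB_excess S"
    by (rule emeasure_transfer_measure_add[OF sets_\<nu> continuous_weights(3) _ continuous_weights(5) _ assms])
      (simp_all add: weights_nonneg)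
  ultimately show ?thesis by simp
qed

lemma sum_weights: "x \<in> \<Omega> \<Longrightarrow> (\<Sum>y\<in>#F x. wA y) = 1" "x \<in> \<Omega> \<Longrightarrow> (\<Sum>y\<in>#F x. wB y) = 1"
  using A_normalized B_normalized by (simp_all add: normalized_def wA_def wB_def)

lemma emeasure_LA_excess_eq_LB_excess: "emeasure LA_excess \<Omega> = emeasure LB_excess \<Omega>"
proof -
  have "(\<Sum>y\<in>#F x. wA_excess y) = (\<Sum>y\<in>#F x. wB_excess y)" if "x \<in> \<Omega>" for x
    using sum_weights[OF that] by (simp add: wA_excess_def wB_excess_def sum_mset_image_diff)
  then have "(\<integral>\<^sup>+x. ennreal (\<Sum>y\<in>#F x. wA_excess y) \<partial>\<nu>) = (\<integral>\<^sup>+x. ennreal (\<Sum>y\<in>#F x. wB_excess y) \<partial>\<nu>)"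
    by (intro nn_integral_cong) (simp add: space_\<nu>)
  then show ?thesis
    using emeasure_transfer_measure_\<Omega>[OF sets_\<nu> continuous_weights(4)]
      emeasure_transfer_measure_\<Omega>[OF sets_\<nu> continuous_weights(5)]
    by (simp add: weights_nonneg)
qed

lemma wA_excess_le:
  assumes "y \<in> \<Omega>"
  shows "wA_excess y \<le> \<epsilon> * wA y"
proof -
  have "wA_excess y \<le> \<bar>A y - B y\<bar> * wA y"
    using exp_minus_min_exp_le by (simp add: wA_excess_def w_common_def wA_def wB_def)
  also have "\<dots> \<le> \<epsilon> * wA y" using A_B_close[OF assms] by (intro mult_right_mono) (simp_all add: wA_def)
  finally show ?thesis .
qed

lemma emeasure_LA_excess_le: "emeasure LA_excess \<Omega> \<le> ennreal \<epsilon>"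
proof -
  interpret prob_space \<nu> using borel_prob_prob_space[OF \<nu>_borel_prob] .
  have "(\<Sum>y\<in>#F x. wA_excess y) \<le> \<epsilon>" if "x \<in> \<Omega>" for x
  proof -
    have "(\<Sum>y\<in>#F x. wA_excess y) \<le> (\<Sum>y\<in>#F x. \<epsilon> * wA y)"
      using F_subset[OF that] wA_excess_le by (intro sum_mset_mono) auto
    also have "\<dots> = \<epsilon>" using sum_weights(1)[OF that] by (simp flip: sum_mset_distrib_left)
    finally show ?thesis .
  qed
  then have "(\<integral>\<^sup>+x. ennreal (\<Sum>y\<in>#F x. wA_excess y) \<partial>\<nu>) \<le> (\<integral>\<^sup>+x. ennreal \<epsilon> \<partial>\<nu>)"
    by (intro nn_integral_mono ennreal_leI) (simp add: space_\<nu>)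
  then show ?thesis
    using emeasure_transfer_measure_\<Omega>[OF sets_\<nu> continuous_weights(4)]
    by (simp add: weights_nonneg emeasure_space_1)
qed

definition "excess = measure LA_excess \<Omega>"

lemma excess_nonneg: "0 \<le> excess" by (simp add: excess_def)

lemma emeasure_LA_excess: "emeasure LA_excess \<Omega> = ennreal excess"
  unfolding excess_def
  using emeasure_LA_excess_le by (intro emeasure_eq_ennreal_measure neq_top_trans[OF ennreal_neq_top])

lemma emeasure_LB_excess: "emeasure LB_excess \<Omega> = ennreal excess"
  using emeasure_LA_excess emeasure_LA_excess_eq_LB_excess by simp

lemma excess_le: "excess \<le> \<epsilon>" using emeasure_LA_excess_le emeasure_LA_excess \<epsilon>_nonneg by simp

lemma emeasure_excess_le:
  assumes "S \<in> sets M\<Omega>"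
  shows "emeasure LA_excess S \<le> ennreal excess" "emeasure LB_excess S \<le> ennreal excess"
  using emeasure_mono[of S \<Omega> LA_excess] emeasure_mono[of S \<Omega> LB_excess] sets_M\<Omega>_subset[OF assms]
  by (simp_all add: emeasure_LA_excess emeasure_LB_excess sets_transfer_measure)

lemma emeasure_excess_Times:
  assumes "S \<in> sets M\<Omega>" "T \<in> sets M\<Omega>"
  shows "emeasure (LA_excess \<Otimes>\<^sub>M LB_excess) (S \<times> T) = emeasure LA_excess S * emeasure LB_excess T"
proof -
  interpret finite_measure LB_excess
    by (rule finite_measureI) (simp add: space_transfer_measure emeasure_LB_excess)
  show ?thesis using assms by (intro emeasure_pair_measure_Times) (simp_all add: sets_transfer_measure)
qed

abbreviation "diag \<equiv> (\<lambda>y::'a. (y, y))"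

definition "transfer_coupling =
  add_measure (distr L_common M\<Omega>\<Omega> diag) (scale_measure (ennreal (1 / excess)) (LA_excess \<Otimes>\<^sub>M LB_excess))"

lemma sets_transfer_coupling: "sets transfer_coupling = sets M\<Omega>\<Omega>"
  by (simp add: transfer_coupling_def sets_add_measure)

lemma space_transfer_coupling: "space transfer_coupling = \<Omega> \<times> \<Omega>"
  using sets_eq_imp_space_eq[OF sets_transfer_coupling] by simp

lemma emeasure_transfer_coupling:
  assumes X: "X \<in> sets M\<Omega>\<Omega>"
  shows "emeasure transfer_coupling X
    = emeasure L_common (diag -` X \<inter> \<Omega>) + ennreal (1 / excess) * emeasure (LA_excess \<Otimes>\<^sub>M LB_excess) X"
proof -
  have diag_measurable: "diag \<in> L_common \<rightarrow>\<^sub>M M\<Omega>\<Omega>"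
    unfolding measurable_cong_sets[OF sets_transfer_measure refl] by measurable
  have "sets (scale_measure (ennreal (1 / excess)) (LA_excess \<Otimes>\<^sub>M LB_excess)) = sets (distr L_common M\<Omega>\<Omega> diag)"
    by (simp, intro sets_pair_measure_cong sets_transfer_measure)
  then show ?thesis
    unfolding transfer_coupling_def using X diag_measurable
    by (simp add: emeasure_add_measure emeasure_distr space_transfer_measure)
qed

lemma emeasure_transfer_coupling_fst:
  assumes S: "S \<in> sets M\<Omega>"
  shows "emeasure transfer_coupling (S \<times> \<Omega>) = emeasure LA S"
proof -
  have "diag -` (S \<times> \<Omega>) \<inter> \<Omega> = S" using sets_M\<Omega>_subset[OF S] by auto
  then have "emeasure transfer_coupling (S \<times> \<Omega>)
      = emeasure L_common S + ennreal (1 / excess) * (emeasure LA_excess S * ennreal excess)"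
    using S by (simp add: emeasure_transfer_coupling pair_measureI emeasure_excess_Times emeasure_LB_excess)
  also have "\<dots> = emeasure LA S"
    using S by (simp add: ennreal_divide_mult_cancel excess_nonneg emeasure_excess_le emeasure_LA_split)
  finally show ?thesis .
qed

lemma emeasure_transfer_coupling_snd:
  assumes S: "S \<in> sets M\<Omega>"
  shows "emeasure transfer_coupling (\<Omega> \<times> S) = emeasure LB S"
proof -
  have "diag -` (\<Omega> \<times> S) \<inter> \<Omega> = S" using sets_M\<Omega>_subset[OF S] by auto
  then have "emeasure transfer_coupling (\<Omega> \<times> S)
      = emeasure L_common S + ennreal (1 / excess) * (emeasure LB_excess S * ennreal excess)"
    using S by (simp add: emeasure_transfer_coupling pair_measureI emeasure_excess_Times emeasure_LA_excess
        mult.commute)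
  also have "\<dots> = emeasure LB S"
    using S by (simp add: ennreal_divide_mult_cancel excess_nonneg emeasure_excess_le emeasure_LB_split)
  finally show ?thesis .
qed

lemma transfer_coupling_in_couplings: "transfer_coupling \<in> couplings \<Omega> LA LB"
  by (rule couplings_intro[OF sets_transfer_coupling LA_borel_prob LB_borel_prob
        emeasure_transfer_coupling_fst emeasure_transfer_coupling_snd])

lemma cost_transfer_coupling: "cost transfer_coupling \<le> diameter \<Omega> * excess"
proof -
  define Off where "Off = {p \<in> \<Omega> \<times> \<Omega>. fst p \<noteq> snd p}"
  have "(\<lambda>p. dist (fst p) (snd p)) -` (- {0}) \<inter> space M\<Omega>\<Omega> \<in> sets M\<Omega>\<Omega>"
    by (rule measurable_sets[OF borel_measurable_dist]) (simp add: borel_open open_Compl)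
  also have "(\<lambda>p. dist (fst p) (snd p)) -` (- {0}) \<inter> space M\<Omega>\<Omega> = Off" by (auto simp: Off_def)
  finally have Off: "Off \<in> sets M\<Omega>\<Omega>" .
  have "emeasure (LA_excess \<Otimes>\<^sub>M LB_excess) Off \<le> emeasure (LA_excess \<Otimes>\<^sub>M LB_excess) (\<Omega> \<times> \<Omega>)"
    using Off by (intro emeasure_mono)
      (auto simp: Off_def sets_pair_measure_cong[OF sets_transfer_measure sets_transfer_measure])
  also have "\<dots> = ennreal excess * ennreal excess"
    by (simp add: emeasure_excess_Times[OF \<Omega>_in_sets \<Omega>_in_sets] emeasure_LA_excess emeasure_LB_excess)
  finally have product_Off: "emeasure (LA_excess \<Otimes>\<^sub>M LB_excess) Off \<le> ennreal excess * ennreal excess" .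
  have "diag -` Off \<inter> \<Omega> = {}" by (auto simp: Off_def)
  then have "emeasure transfer_coupling Off = ennreal (1 / excess) * emeasure (LA_excess \<Otimes>\<^sub>M LB_excess) Off"
    using emeasure_transfer_coupling[OF Off] by simp
  also have "\<dots> \<le> ennreal (1 / excess) * (ennreal excess * ennreal excess)"
    using product_Off by (rule mult_left_mono) simp
  also have "\<dots> = ennreal excess" by (rule ennreal_divide_mult_cancel[OF excess_nonneg order_refl])
  finally have Off_small: "emeasure transfer_coupling Off \<le> ennreal excess" .
  have "ennreal (cost transfer_coupling) = (\<integral>\<^sup>+q. ennreal (dist (fst q) (snd q)) \<partial>transfer_coupling)"
    by (rule nn_integral_dist_coupling[OF transfer_coupling_in_couplings, symmetric])
  also have "\<dots> \<le> (\<integral>\<^sup>+q. ennreal (diameter \<Omega>) * indicator Off q \<partial>transfer_coupling)"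
  proof (rule nn_integral_mono)
    fix q assume "q \<in> space transfer_coupling"
    then have q: "fst q \<in> \<Omega>" "snd q \<in> \<Omega>" by (auto simp: space_transfer_coupling)
    show "ennreal (dist (fst q) (snd q)) \<le> ennreal (diameter \<Omega>) * indicator Off q"
    proof (cases "fst q = snd q")
      case False
      then have "q \<in> Off" using q by (simp add: Off_def mem_Times_iff)
      then show ?thesis using dist_le_diameter[OF q] by (simp add: ennreal_leI)
    qed simp
  qed
  also have "\<dots> = ennreal (diameter \<Omega>) * emeasure transfer_coupling Off"
    using Off sets_transfer_coupling by (simp add: nn_integral_cmult_indicator)
  also have "\<dots> \<le> ennreal (diameter \<Omega>) * ennreal excess" by (rule mult_left_mono[OF Off_small]) simp
  also have "\<dots> = ennreal (diameter \<Omega> * excess)" using diameter_nonneg excess_nonneg by (simp add: ennreal_mult)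
  finally show ?thesis
    using ennreal_le_iff[of "diameter \<Omega> * excess" "cost transfer_coupling"] diameter_nonneg excess_nonneg
    by simp
qed

lemma W1_transfer_dual_le: "W1 \<Omega> (transfer_dual \<Omega> F A \<nu>) (transfer_dual \<Omega> F B \<nu>) \<le> diameter \<Omega> * \<epsilon>"
proof -
  have "W1 \<Omega> (transfer_dual \<Omega> F A \<nu>) (transfer_dual \<Omega> F B \<nu>) \<le> cost transfer_coupling"
    unfolding transfer_dual_A transfer_dual_B by (rule W1_le_cost[OF transfer_coupling_in_couplings])
  also have "\<dots> \<le> diameter \<Omega> * excess" by (rule cost_transfer_coupling)
  also have "\<dots> \<le> diameter \<Omega> * \<epsilon>" using excess_le diameter_nonneg by (intro mult_left_mono)
  finally show ?thesis .
qed

end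

section \<open>Stability of Gibbs measures\<close>

lemma borel_prob_nonempty: "\<mu> \<in> borel_prob \<Omega> \<Longrightarrow> \<Omega> \<noteq> {}"
  using prob_space.not_empty[of \<mu>] sets_eq_imp_space_eq[of \<mu> "restrict_space borel \<Omega>"]
  by (auto simp: borel_prob_def space_restrict_space)

context compact_domain
begin

lemma abs_le_sup_norm:
  assumes "continuous_on \<Omega> f" "y \<in> \<Omega>"
  shows "\<bar>f y\<bar> \<le> sup_norm \<Omega> f"
proof -
  have "compact ((\<lambda>x. \<bar>f x\<bar>) ` \<Omega>)"
    using assms(1) \<Omega>_compact by (intro compact_continuous_image continuous_intros)
  then have "bdd_above ((\<lambda>x. \<bar>f x\<bar>) ` \<Omega>)" by (intro bounded_imp_bdd_above compact_imp_bounded)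
  then show ?thesis unfolding sup_norm_def by (rule cSUP_upper[OF assms(2)])
qed

end

context iterated_contraction_system
begin

lemma W1_fixed_points_le:
  assumes A: "continuous_on \<Omega> A" "normalized \<Omega> F A" and B: "continuous_on \<Omega> B" "normalized \<Omega> F B"
    and \<mu>A: "\<mu>A \<in> borel_prob \<Omega>" "transfer_dual \<Omega> F A \<mu>A = \<mu>A"
    and \<mu>B: "\<mu>B \<in> borel_prob \<Omega>" "transfer_dual \<Omega> F B \<mu>B = \<mu>B"
    and "0 \<le> C" "0 \<le> r" "r < 1"
    and contraction: "\<And>n \<mu> \<nu>. \<mu> \<in> borel_prob \<Omega> \<Longrightarrow> \<nu> \<in> borel_prob \<Omega> \<Longrightarrow>
           W1 \<Omega> ((transfer_dual \<Omega> F A ^^ n) \<mu>) ((transfer_dual \<Omega> F A ^^ n) \<nu>) \<le> C * r ^ n * W1 \<Omega> \<mu> \<nu>"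
  shows "W1 \<Omega> \<mu>A \<mu>B \<le> C / (1 - r) * diameter \<Omega> * sup_norm \<Omega> (\<lambda>x. A x - B x)"
proof -
  let ?L = "transfer_dual \<Omega> F A"
  have L\<mu>B: "?L \<mu>B \<in> borel_prob \<Omega>" by (rule transfer_dual_borel_prob[OF \<mu>B(1) A])
  have one_step: "W1 \<Omega> (?L \<mu>B) \<mu>B \<le> diameter \<Omega> * sup_norm \<Omega> (\<lambda>x. A x - B x)"
  proof -
    interpret potential_pair \<Omega> F k \<theta> A B "sup_norm \<Omega> (\<lambda>x. A x - B x)" \<mu>B
      using A B \<mu>B(1) abs_le_sup_norm[of "\<lambda>x. A x - B x"]
      by unfold_locales (auto intro: continuous_intros)
    show ?thesis using W1_transfer_dual_le \<mu>B(2) by simp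
  qed
  have "W1 \<Omega> \<mu>A \<mu>B \<le> C / (1 - r) * W1 \<Omega> (?L \<mu>B) \<mu>B"
    using \<open>0 \<le> C\<close> \<open>0 \<le> r\<close> \<open>r < 1\<close> \<mu>A \<mu>B(1) W1_nonneg[OF L\<mu>B \<mu>B(1)]
    by (intro fixed_point_perturbation[where X = "borel_prob \<Omega>"] contraction W1_triangle
        transfer_dual_borel_prob[OF _ A])
  also have "\<dots> \<le> C / (1 - r) * (diameter \<Omega> * sup_norm \<Omega> (\<lambda>x. A x - B x))"
    using one_step \<open>0 \<le> C\<close> \<open>r < 1\<close> by (intro mult_left_mono) simp_all
  finally show ?thesis by (simp only: mult.assoc)
qed

end

theorem mainTheorem4:
  fixes \<Omega> :: "'a::metric_space set" and F :: "'a \<Rightarrow> 'a multiset"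
    and k :: nat and \<theta> C r :: real and A B :: "'a \<Rightarrow> real"
    and \<mu>A \<mu>B :: "'a measure"
  assumes "compact \<Omega>"
    and "0 < \<theta>" "\<theta> < 1"
    and "is_ICS \<Omega> k \<theta> F" and "has_attractor \<Omega> F"
    and "\<exists>L. lipschitz_on L \<Omega> A" and "\<exists>L. lipschitz_on L \<Omega> B"
    and "normalized \<Omega> F A" and "normalized \<Omega> F B"
    and "\<mu>A \<in> borel_prob \<Omega>" and "transfer_dual \<Omega> F A \<mu>A = \<mu>A"
    and "\<mu>B \<in> borel_prob \<Omega>" and "transfer_dual \<Omega> F B \<mu>B = \<mu>B"
    and "0 < C" and "0 < r" and "r < 1"
    and "\<forall>n. \<forall>\<mu>\<in>borel_prob \<Omega>. \<forall>\<nu>\<in>borel_prob \<Omega>.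
           W1 \<Omega> ((transfer_dual \<Omega> F A ^^ n) \<mu>) ((transfer_dual \<Omega> F A ^^ n) \<nu>)
             \<le> C * r ^ n * W1 \<Omega> \<mu> \<nu>"
  shows "W1 \<Omega> \<mu>A \<mu>B \<le> C / (1 - r) * diameter \<Omega> * sup_norm \<Omega> (\<lambda>x. A x - B x)
       \<and> (\<forall>\<phi>. (\<exists>L. lipschitz_on L \<Omega> \<phi>) \<longrightarrow>
            \<bar>(\<integral>x. \<phi> x \<partial>\<mu>A) - (\<integral>x. \<phi> x \<partial>\<mu>B)\<bar>
              \<le> C / (1 - r) * diameter \<Omega> * Lip \<Omega> \<phi> * sup_norm \<Omega> (\<lambda>x. A x - B x))"
proof -
  interpret iterated_contraction_system \<Omega> F k \<theta>
    using assms(1-4) borel_prob_nonempty[OF assms(10)] by unfold_locales auto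
  have W: "W1 \<Omega> \<mu>A \<mu>B \<le> C / (1 - r) * diameter \<Omega> * sup_norm \<Omega> (\<lambda>x. A x - B x)"
  proof (rule W1_fixed_points_le)
    show "continuous_on \<Omega> A" "continuous_on \<Omega> B"
      using assms(6,7) lipschitz_on_continuous_on by blast+
  qed (use assms(8-17) in auto)
  have "\<bar>(\<integral>x. \<phi> x \<partial>\<mu>A) - (\<integral>x. \<phi> x \<partial>\<mu>B)\<bar>
      \<le> C / (1 - r) * diameter \<Omega> * Lip \<Omega> \<phi> * sup_norm \<Omega> (\<lambda>x. A x - B x)"
    if "lipschitz_on L \<Omega> \<phi>" for L \<phi>
  proof -
    have Lip: "lipschitz_on (Lip \<Omega> \<phi>) \<Omega> \<phi>" using that by (rule lipschitz_on_Lip)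
    have "\<bar>(\<integral>x. \<phi> x \<partial>\<mu>A) - (\<integral>x. \<phi> x \<partial>\<mu>B)\<bar> \<le> Lip \<Omega> \<phi> * W1 \<Omega> \<mu>A \<mu>B"
      using assms(10,12) Lip by (rule integral_diff_le_lipschitz_W1)
    also have "\<dots> \<le> Lip \<Omega> \<phi> * (C / (1 - r) * diameter \<Omega> * sup_norm \<Omega> (\<lambda>x. A x - B x))"
      using W lipschitz_on_nonneg[OF Lip] by (rule mult_left_mono)
    finally show ?thesis by (simp add: ac_simps)
  qed
  with W show ?thesis by blast
qed

end
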